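(* Let $\lambda=p_1(x)dq_1+p_2(x)dq_2$ be a toric contact form and let $x_0$ be a center of the perturbation $\lambda_{\varepsilon,L}$ (so $T_{x_0}$ is foliated by closed Reeb orbits of $\lambda$) with $W=p_1'(x_0)p_2''(x_0)-p_1''(x_0)p_2'(x_0)>0$. Let $\gamma_h$ and $\gamma_e$ be the closed Reeb orbits of $\lambda_{\varepsilon,L}$ in $T_{x_0}$ corresponding respectively to the minimum and the maximum of $f_0(q_1,q_2)=\cos(2\pi(-b_0q_1+a_0q_2))$. Then $CZ_{\tau_0}(\gamma_h)=0$ and $CZ_{\tau_0}(\gamma_e)=1$.
   Context: $Q(x)=p_1p_2'-p_2p_1'>0$; Reeb field $R=Q^{-1}(p_2'\partial_{q_1}-p_1'\partial_{q_2})$; $(a_0,b_0)$ is the primitive integer vector positively proportional to $R$ on $T_{x_0}$. The perturbation is $\lambda_{\varepsilon,L}=e^{\varepsilon F_L}\lambda$ with $F_L=\sum_i\beta_i(x)\cos(2\pi(-b_iq_1+a_iq_2))$, where the $x_i$ (centers) are the finitely many points whose fibers contain closed Reeb orbits of action $<L$, and $\beta_i$ are bump functions with $\beta_i(x)=1-(x-x_i)^2$ near $x_i$ and small disjoint supports; $\varepsilon>0$ is small. $\tau_0$ is the trivialization of $\xi$ given by $V_1=\partial_x$, $V_2=Q(x)^{-1}(p_1\partial_{q_2}-p_2\partial_{q_1})$. *)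

theory Defs
  imports "HOL-Analysis.Analysis"
begin

text \<open>Coordinates on the universal cover of T^2 x I: a point P :: real^3 has
  P$1 = x, P$2 = q1, P$3 = q2 (q1, q2 taken modulo 1).\<close>

definition smooth_on :: "(real \<Rightarrow> real) \<Rightarrow> real set \<Rightarrow> bool" where
  "smooth_on f S \<longleftrightarrow> (\<forall>k. \<forall>x\<in>S. ((deriv ^^ k) f) field_differentiable (at x))"

definition Qf :: "(real \<Rightarrow> real) \<Rightarrow> (real \<Rightarrow> real) \<Rightarrow> real \<Rightarrow> real" where
  "Qf p1 p2 x = p1 x * deriv p2 x - p2 x * deriv p1 x"

definition toric_reeb :: "(real \<Rightarrow> real) \<Rightarrow> (real \<Rightarrow> real) \<Rightarrow> real \<Rightarrow> real \<times> real" where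
  "toric_reeb p1 p2 x = (deriv p2 x / Qf p1 p2 x, - deriv p1 x / Qf p1 p2 x)"

definition toric_contact :: "(real \<Rightarrow> real) \<Rightarrow> (real \<Rightarrow> real) \<Rightarrow> real set \<Rightarrow> bool" where
  "toric_contact p1 p2 I \<longleftrightarrow> (\<exists>a b. a < b \<and> I = {a<..<b}) \<and> smooth_on p1 I \<and> smooth_on p2 I
      \<and> (\<forall>x\<in>I. Qf p1 p2 x > 0)"

text \<open>Points x whose fiber T_x contains a closed Reeb orbit of lambda of action < L.
  On T_x the Reeb flow is the linear flow q \<mapsto> q + t R(x); a closed orbit of
  period T exists iff T R(x) \<in> Z^2, and its action equals T (since lambda(R) = 1).\<close>
definition centers :: "(real \<Rightarrow> real) \<Rightarrow> (real \<Rightarrow> real) \<Rightarrow> real set \<Rightarrow> real \<Rightarrow> real set" where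
  "centers p1 p2 I L = {x\<in>I. \<exists>T. 0 < T \<and> T < L \<and>
      T * fst (toric_reeb p1 p2 x) \<in> \<int> \<and> T * snd (toric_reeb p1 p2 x) \<in> \<int>}"

definition prim_dir :: "(real \<Rightarrow> real) \<Rightarrow> (real \<Rightarrow> real) \<Rightarrow> real \<Rightarrow> int \<times> int" where
  "prim_dir p1 p2 x = (THE ab. coprime (fst ab) (snd ab) \<and>
      (\<exists>s>0. real_of_int (fst ab) = s * fst (toric_reeb p1 p2 x)
           \<and> real_of_int (snd ab) = s * snd (toric_reeb p1 p2 x)))"

definition pert_F :: "(real \<Rightarrow> real) \<Rightarrow> (real \<Rightarrow> real) \<Rightarrow> real set \<Rightarrow> (real \<Rightarrow> real \<Rightarrow> real)
     \<Rightarrow> real^3 \<Rightarrow> real" where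
  "pert_F p1 p2 C \<beta> P = (\<Sum>c\<in>C. \<beta> c (P$1) *
      cos (2 * pi * (- real_of_int (snd (prim_dir p1 p2 c)) * P$2
                     + real_of_int (fst (prim_dir p1 p2 c)) * P$3)))"

text \<open>A 1-form on (an open subset of) R^3 is given by its coefficient vector field
  (coefficients of dx, dq1, dq2).  The perturbed form lambda_eps = e^{eps F} lambda.\<close>
definition pert_form :: "(real \<Rightarrow> real) \<Rightarrow> (real \<Rightarrow> real) \<Rightarrow> real set \<Rightarrow> (real \<Rightarrow> real \<Rightarrow> real)
     \<Rightarrow> real \<Rightarrow> real^3 \<Rightarrow> real^3" where
  "pert_form p1 p2 C \<beta> \<epsilon> P = exp (\<epsilon> * pert_F p1 p2 C \<beta> P) *\<^sub>R vector [0, p1 (P$1), p2 (P$1)]"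

definition dform :: "(real^3 \<Rightarrow> real^3) \<Rightarrow> real^3 \<Rightarrow> 3 \<Rightarrow> 3 \<Rightarrow> real" where
  "dform \<alpha> P i j = frechet_derivative (\<lambda>y. \<alpha> y $ j) (at P) (axis i 1)
                   - frechet_derivative (\<lambda>y. \<alpha> y $ i) (at P) (axis j 1)"

definition reeb :: "(real^3 \<Rightarrow> real^3) \<Rightarrow> real^3 \<Rightarrow> real^3" where
  "reeb \<alpha> P = (THE R. \<alpha> P \<bullet> R = 1 \<and> (\<forall>j. (\<Sum>i\<in>UNIV. R $ i * dform \<alpha> P i j) = 0))"

text \<open>Trivialization tau_0 of xi: V1 = d/dx, V2 = Q^{-1}(p1 d/dq2 - p2 d/dq1).\<close>
definition V1 :: "real^3 \<Rightarrow> real^3" where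
  "V1 P = vector [1, 0, 0]"

definition V2 :: "(real \<Rightarrow> real) \<Rightarrow> (real \<Rightarrow> real) \<Rightarrow> real^3 \<Rightarrow> real^3" where
  "V2 p1 p2 P = (1 / Qf p1 p2 (P$1)) *\<^sub>R vector [0, - p2 (P$1), p1 (P$1)]"

text \<open>Conley--Zehnder index of a path Psi : [0,T] -> Sp(2) with Psi(0) = I
  (definition via the rotation interval, as in Hutchings' lecture notes):
  for v \<noteq> 0 let theta_v be a continuous angle of Psi(t)v; the rotation numbers
  (theta_v(T) - theta_v(0))/(2 pi) form an interval; CZ = 2k if the integer k lies
  in it, and 2k+1 if it lies in (k, k+1).\<close>
definition rot_set :: "(real \<Rightarrow> real^2^2) \<Rightarrow> real \<Rightarrow> real set" where
  "rot_set \<Psi> T = {r. \<exists>v \<theta>. v \<noteq> 0 \<and> continuous_on {0..T} \<theta> \<and>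
      (\<forall>t\<in>{0..T}. \<Psi> t *v v = norm (\<Psi> t *v v) *\<^sub>R vector [cos (\<theta> t), sin (\<theta> t)]) \<and>
      r = (\<theta> T - \<theta> 0) / (2 * pi)}"

definition CZ_path :: "(real \<Rightarrow> real^2^2) \<Rightarrow> real \<Rightarrow> int" where
  "CZ_path \<Psi> T = (if \<exists>k::int. real_of_int k \<in> rot_set \<Psi> T
      then 2 * (THE k::int. real_of_int k \<in> rot_set \<Psi> T)
      else 2 * \<lfloor>SOME r. r \<in> rot_set \<Psi> T\<rfloor> + 1)"

definition reeb_traj :: "(real^3 \<Rightarrow> real^3) \<Rightarrow> real^3 \<Rightarrow> (real \<Rightarrow> real^3) \<Rightarrow> bool" where
  "reeb_traj \<alpha> P0 \<gamma> \<longleftrightarrow> \<gamma> 0 = P0 \<and> (\<forall>t. (\<gamma> has_vector_derivative reeb \<alpha> (\<gamma> t)) (at t))"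

definition closes_at :: "(real \<Rightarrow> real^3) \<Rightarrow> real \<Rightarrow> bool" where
  "closes_at \<gamma> s \<longleftrightarrow> \<gamma> s $ 1 = \<gamma> 0 $ 1 \<and> \<gamma> s $ 2 - \<gamma> 0 $ 2 \<in> \<int> \<and> \<gamma> s $ 3 - \<gamma> 0 $ 3 \<in> \<int>"

definition min_period :: "(real \<Rightarrow> real^3) \<Rightarrow> real \<Rightarrow> bool" where
  "min_period \<gamma> T \<longleftrightarrow> 0 < T \<and> closes_at \<gamma> T \<and> (\<forall>s. 0 < s \<and> s < T \<longrightarrow> \<not> closes_at \<gamma> s)"

definition lin_sol :: "(real^3 \<Rightarrow> real^3) \<Rightarrow> (real \<Rightarrow> real^3) \<Rightarrow> real^3 \<Rightarrow> (real \<Rightarrow> real^3) \<Rightarrow> bool" where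
  "lin_sol \<alpha> \<gamma> v Y \<longleftrightarrow> Y 0 = v \<and>
     (\<forall>t. (Y has_vector_derivative frechet_derivative (reeb \<alpha>) (at (\<gamma> t)) (Y t)) (at t))"

text \<open>Psi(t) is the matrix of the linearized flow d phi_t : xi_{gamma(0)} -> xi_{gamma(t)}
  in the bases (W1, W2).\<close>
definition lin_matrix :: "(real^3 \<Rightarrow> real^3) \<Rightarrow> (real^3 \<Rightarrow> real^3) \<Rightarrow> (real \<Rightarrow> real^3)
     \<Rightarrow> (real \<Rightarrow> real^3) \<Rightarrow> (real \<Rightarrow> real^3) \<Rightarrow> (real \<Rightarrow> real^2^2) \<Rightarrow> bool" where
  "lin_matrix W1 W2 \<gamma> Y1 Y2 \<Psi> \<longleftrightarrow> (\<forall>t.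
      Y1 t = (\<Psi> t $ 1 $ 1) *\<^sub>R W1 (\<gamma> t) + (\<Psi> t $ 2 $ 1) *\<^sub>R W2 (\<gamma> t) \<and>
      Y2 t = (\<Psi> t $ 1 $ 2) *\<^sub>R W1 (\<gamma> t) + (\<Psi> t $ 2 $ 2) *\<^sub>R W2 (\<gamma> t))"

definition CZ_orbit_is :: "(real^3 \<Rightarrow> real^3) \<Rightarrow> (real^3 \<Rightarrow> real^3) \<Rightarrow> (real^3 \<Rightarrow> real^3)
     \<Rightarrow> real^3 \<Rightarrow> int \<Rightarrow> bool" where
  "CZ_orbit_is \<alpha> W1 W2 P0 k \<longleftrightarrow>
     (\<exists>\<gamma> T Y1 Y2 \<Psi>. reeb_traj \<alpha> P0 \<gamma> \<and> min_period \<gamma> T \<and>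
        lin_sol \<alpha> \<gamma> (W1 P0) Y1 \<and> lin_sol \<alpha> \<gamma> (W2 P0) Y2 \<and> lin_matrix W1 W2 \<gamma> Y1 Y2 \<Psi>) \<and>
     (\<forall>\<gamma> T Y1 Y2 \<Psi>. reeb_traj \<alpha> P0 \<gamma> \<and> min_period \<gamma> T \<and>
        lin_sol \<alpha> \<gamma> (W1 P0) Y1 \<and> lin_sol \<alpha> \<gamma> (W2 P0) Y2 \<and> lin_matrix W1 W2 \<gamma> Y1 Y2 \<Psi>
        \<longrightarrow> CZ_path \<Psi> T = k)"

end

theory Submission imports Defs begin

text \<open>Near a center \<open>x0\<close> the perturbed form is \<open>e\<^sup>\<epsilon>\<^sup>F \<lambda>\<close> with
  \<open>F = (1 - (x - x0)\<^sup>2) cos (2 \<pi> \<theta>)\<close>, \<open>\<theta> = - b0 q1 + a0 q2\<close>. Where \<open>sin (2 \<pi> \<theta>) = 0\<close>, the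
  Reeb field is tangent to \<open>T\<^sub>x\<^sub>0\<close> and depends only on \<open>x\<close> and \<open>\<theta>\<close>, so the orbit is the straight
  closed line in direction \<open>(a0, b0)\<close>, of period \<open>s e\<^sup>\<epsilon>\<^sup>\<sigma>\<close> with \<open>\<sigma> = cos (2 \<pi> \<theta>) = \<plusminus>1\<close>.
  In the trivialization \<open>\<tau>\<^sub>0\<close> the linearized flow is the planar system
  \<open>x' = - \<sigma> A \<theta>\<close>, \<open>\<theta>' = B x\<close> with \<open>A\<close> of order \<open>\<epsilon>\<close> and \<open>B\<close> of order \<open>W > 0\<close>.
  At the minimum of \<open>f\<^sub>0\<close> (\<open>\<sigma> = -1\<close>) it is hyperbolic: every vector turns by less than
  half a turn and an eigenvector does not turn at all, so \<open>CZ = 0\<close>. At the maximum (\<open>\<sigma> = 1\<close>) it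
  is elliptic with \<open>\<omega> T < 2 \<pi>\<close> for small \<open>\<epsilon>\<close>: every vector turns positively by less than a full
  turn, so all rotation numbers lie in \<open>(0, 1)\<close> and \<open>CZ = 1\<close>.\<close>

section \<open>Calculus and uniqueness of solutions\<close>

lemma has_derivative_vec_nth [derivative_intros]:
  "((\<lambda>x::real^'n. x $ i) has_derivative (\<lambda>h. h $ i)) (at x within S)"
  by (rule bounded_linear_imp_has_derivative[OF bounded_linear_vec_nth])

lemma has_derivative_comp_vec_nth:
  "DERIV f (x $ i) :> d \<Longrightarrow> ((\<lambda>y::real^'n. f (y $ i)) has_derivative (\<lambda>h. h $ i * d)) (at x within S)"
  using DERIV_compose_FDERIV[of f d "\<lambda>y. y $ i" x "\<lambda>h. h $ i" S] has_derivative_vec_nth by blast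

lemma vector3_eq_axis: "(vector [a, b, c] :: real^3) = a *\<^sub>R axis 1 1 + b *\<^sub>R axis 2 1 + c *\<^sub>R axis 3 1"
  by (simp add: vec_eq_iff forall_3 axis_def)

lemma has_derivative_vector3 [derivative_intros]:
  "(f1 has_derivative f1') F \<Longrightarrow> (f2 has_derivative f2') F \<Longrightarrow> (f3 has_derivative f3') F \<Longrightarrow>
   ((\<lambda>x. vector [f1 x, f2 x, f3 x] :: real^3) has_derivative (\<lambda>h. vector [f1' h, f2' h, f3' h])) F"
  unfolding vector3_eq_axis by (intro derivative_intros)

lemma has_vector_derivative_vec_nth:
  "(Y has_vector_derivative D) (at t) \<Longrightarrow> ((\<lambda>t. Y t $ i) has_real_derivative D $ i) (at t)"
  unfolding has_vector_derivative_def has_field_derivative_def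
  by (drule bounded_linear.has_derivative[OF bounded_linear_vec_nth, of _ _ _ i]) (simp add: mult_commute_abs)

lemma has_real_derivative_inner_self:
  fixes z :: "real \<Rightarrow> 'a::real_inner"
  assumes "(z has_vector_derivative v) (at t)"
  shows "((\<lambda>t. z t \<bullet> z t) has_real_derivative (2 * (z t \<bullet> v))) (at t)"
proof -
  have "((\<lambda>t. z t \<bullet> z t) has_derivative (\<lambda>h. z t \<bullet> (h *\<^sub>R v) + (h *\<^sub>R v) \<bullet> z t)) (at t)"
    using assms unfolding has_vector_derivative_def by (intro derivative_intros)
  moreover have "(\<lambda>h. z t \<bullet> (h *\<^sub>R v) + (h *\<^sub>R v) \<bullet> z t) = (*) (2 * (z t \<bullet> v))"
    by (auto simp: fun_eq_iff inner_commute algebra_simps)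
  ultimately show ?thesis unfolding has_field_derivative_def by simp
qed

lemma has_derivative_locally_Lipschitz:
  fixes F :: "'a::real_normed_vector \<Rightarrow> 'b::real_normed_vector"
  assumes "(F has_derivative F') (at P)"
  obtains \<rho> L where "\<rho> > 0" "L \<ge> 0" "\<And>z. norm z < \<rho> \<Longrightarrow> norm (F (P + z) - F P) \<le> L * norm z"
proof -
  obtain K where K: "\<And>x. norm (F' x) \<le> norm x * K" "K > 0"
    using bounded_linear.pos_bounded[OF has_derivative_bounded_linear[OF assms]] by blast
  obtain d where d: "d > 0" "\<And>x'. 0 < norm (x' - P) \<Longrightarrow> norm (x' - P) < d \<Longrightarrow>
      norm (F x' - F P - F' (x' - P)) / norm (x' - P) < 1"
    using assms unfolding has_derivative_at' by (meson zero_less_one)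
  have "norm (F (P + z) - F P) \<le> (K + 1) * norm z" if z: "norm z < d" for z
  proof (cases "z = 0")
    case False
    hence "norm (F (P + z) - F P - F' z) \<le> norm z"
      using d(2)[of "P + z"] z by (simp add: divide_less_eq)
    hence "norm (F (P + z) - F P - F' z) + norm (F' z) \<le> norm z + norm z * K"
      using K(1)[of z] by linarith
    moreover have "norm (F (P + z) - F P) \<le> norm (F (P + z) - F P - F' z) + norm (F' z)"
      using norm_triangle_ineq[of "F (P + z) - F P - F' z" "F' z"] by simp
    ultimately show ?thesis by (simp add: algebra_simps)
  qed simp
  with d(1) K(2) show ?thesis using that[of d "K + 1"] by simp
qed

lemma Gronwall_zero_forward:
  fixes f f' :: "real \<Rightarrow> real"
  assumes "s \<le> t" "f s = 0"
    and "\<And>u. s \<le> u \<Longrightarrow> u \<le> t \<Longrightarrow> (f has_real_derivative f' u) (at u) \<and> f u \<ge> 0 \<and> \<bar>f' u\<bar> \<le> L * f u"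
  shows "f t = 0"
proof -
  have "exp (- L * t) * f t \<le> exp (- L * s) * f s"
  proof (rule DERIV_nonpos_imp_nonincreasing[OF assms(1)])
    fix u assume "s \<le> u" "u \<le> t"
    note hyp = assms(3)[OF this]
    have "((\<lambda>u. exp (- L * u) * f u) has_real_derivative exp (- L * u) * (f' u - L * f u)) (at u)"
      using hyp by (auto intro!: derivative_eq_intros simp: algebra_simps)
    moreover have "exp (- L * u) * (f' u - L * f u) \<le> 0"
      using hyp by (intro mult_nonneg_nonpos) auto
    ultimately show "\<exists>y. ((\<lambda>u. exp (- L * u) * f u) has_real_derivative y) (at u) \<and> y \<le> 0" by blast
  qed
  hence "f t \<le> 0" using assms(2) by (simp add: mult_le_0_iff)
  thus ?thesis using assms(1) assms(3)[of t] by simp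
qed

text \<open>The backward case is the forward one for the time-reversed function.\<close>

lemma Gronwall_zero:
  fixes f f' :: "real \<Rightarrow> real"
  assumes "f s = 0"
    and "\<And>u. min s t \<le> u \<Longrightarrow> u \<le> max s t \<Longrightarrow>
           (f has_real_derivative f' u) (at u) \<and> f u \<ge> 0 \<and> \<bar>f' u\<bar> \<le> L * f u"
  shows "f t = 0"
proof (cases "s \<le> t")
  case True
  thus ?thesis using Gronwall_zero_forward[of s t f f' L] assms by simp
next
  case False
  have "f (- (- t)) = 0"
  proof (rule Gronwall_zero_forward[where f = "\<lambda>u. f (- u)" and f' = "\<lambda>u. - f' (- u)" and s = "- s" and t = "- t"])
    fix u assume "- s \<le> u" "u \<le> - t"
    hence hyp: "(f has_real_derivative f' (- u)) (at (- u)) \<and> f (- u) \<ge> 0 \<and> \<bar>f' (- u)\<bar> \<le> L * f (- u)"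
      using assms(2)[of "- u"] False by simp
    have "((\<lambda>u. f (- u)) has_real_derivative - f' (- u)) (at u)"
      using hyp DERIV_mirror[of f "f' (- u)" u] by simp
    thus "((\<lambda>u. f (- u)) has_real_derivative - f' (- u)) (at u) \<and> f (- u) \<ge> 0 \<and> \<bar>- f' (- u)\<bar> \<le> L * f (- u)"
      using hyp by simp
  qed (use False assms(1) in simp_all)
  thus ?thesis by simp
qed

lemma linear_planar_ode_unique:
  fixes x y xs ys :: "real \<Rightarrow> real"
  assumes "\<And>t. (x has_real_derivative (ca * y t)) (at t)" "\<And>t. (y has_real_derivative (cb * x t)) (at t)"
    "\<And>t. (xs has_real_derivative (ca * ys t)) (at t)" "\<And>t. (ys has_real_derivative (cb * xs t)) (at t)"
    "x 0 = xs 0" "y 0 = ys 0"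
  shows "x t = xs t \<and> y t = ys t"
proof -
  define f where "f t = (x t - xs t)^2 + (y t - ys t)^2" for t
  define f' where "f' t = (ca + cb) * (2 * (x t - xs t) * (y t - ys t))" for t
  have "f t = 0"
  proof (rule Gronwall_zero[of f 0 _ f' "\<bar>ca\<bar> + \<bar>cb\<bar>"])
    fix u
    have "(f has_real_derivative f' u) (at u)"
      unfolding f_def[abs_def] f'_def
      by (rule derivative_eq_intros assms(1-4) refl)+ (simp add: algebra_simps)
    moreover have "\<bar>f' u\<bar> \<le> (\<bar>ca\<bar> + \<bar>cb\<bar>) * f u"
    proof -
      define a b where "a = x u - xs u" "b = y u - ys u"
      have "\<bar>2 * a * b\<bar> \<le> a^2 + b^2"
        using sum_squares_bound[of a b] sum_squares_bound[of a "- b"] by (simp add: abs_le_iff)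
      hence "\<bar>ca + cb\<bar> * \<bar>2 * a * b\<bar> \<le> (\<bar>ca\<bar> + \<bar>cb\<bar>) * (a^2 + b^2)"
        by (intro mult_mono abs_triangle_ineq) auto
      moreover have "\<bar>f' u\<bar> = \<bar>ca + cb\<bar> * \<bar>2 * a * b\<bar>" "f u = a^2 + b^2"
        unfolding f_def f'_def a_b_def by (simp_all add: abs_mult)
      ultimately show ?thesis by simp
    qed
    ultimately show "(f has_real_derivative f' u) (at u) \<and> f u \<ge> 0 \<and> \<bar>f' u\<bar> \<le> (\<bar>ca\<bar> + \<bar>cb\<bar>) * f u"
      unfolding f_def by simp
  qed (simp add: f_def assms(5,6))
  thus ?thesis unfolding f_def by (simp add: add_nonneg_eq_0_iff)
qed

lemma vanishing_of_Lipschitz_ode: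
  fixes z :: "real \<Rightarrow> 'a::real_inner"
  assumes deriv: "\<And>t. (z has_vector_derivative D t) (at t)" and "z 0 = 0" "\<rho> > 0"
    and Lipschitz: "\<And>t. norm (z t) < \<rho> \<Longrightarrow> norm (D t) \<le> L * norm (z t)"
  shows "z t = 0"
proof -
  have cont: "isCont z t" for t using has_vector_derivative_continuous[OF deriv] .
  define S where "S = {t. z t = 0}"
  have "closed S"
    unfolding S_def using cont by (intro closed_Collect_eq continuous_at_imp_continuous_on) auto
  moreover have "open S" unfolding open_dist
  proof
    fix t1 assume "t1 \<in> S"
    hence zt1: "z t1 = 0" by (simp add: S_def)
    obtain h where h: "h > 0" "\<And>t. dist t t1 < h \<Longrightarrow> dist (z t) (z t1) < \<rho>"
      using cont[of t1] \<open>\<rho> > 0\<close> unfolding continuous_at_eps_delta by blast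
    have "z t \<bullet> z t = 0" if "dist t t1 < h" for t
    proof (rule Gronwall_zero[of "\<lambda>t. z t \<bullet> z t" t1 t "\<lambda>u. 2 * (z u \<bullet> D u)" "2 * L"])
      fix u assume "min t1 t \<le> u" "u \<le> max t1 t"
      hence "norm (z u) < \<rho>" using h(2)[of u] that zt1 by (simp add: dist_real_def dist_norm)
      hence "\<bar>z u \<bullet> D u\<bar> \<le> norm (z u) * (L * norm (z u))"
        using Cauchy_Schwarz_ineq2[of "z u" "D u"] Lipschitz[of u] by (meson mult_left_mono norm_ge_zero order_trans)
      hence "\<bar>2 * (z u \<bullet> D u)\<bar> \<le> 2 * L * (z u \<bullet> z u)"
        by (simp add: power2_norm_eq_inner[symmetric] power2_eq_square algebra_simps)
      thus "((\<lambda>t. z t \<bullet> z t) has_real_derivative 2 * (z u \<bullet> D u)) (at u) \<and> 0 \<le> z u \<bullet> z u \<and>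
          \<bar>2 * (z u \<bullet> D u)\<bar> \<le> 2 * L * (z u \<bullet> z u)"
        using has_real_derivative_inner_self[OF deriv] by simp
    qed (simp add: zt1)
    thus "\<exists>e>0. \<forall>t. dist t t1 < e \<longrightarrow> t \<in> S" using h(1) by (auto simp: S_def)
  qed
  moreover have "0 \<in> S" using \<open>z 0 = 0\<close> by (simp add: S_def)
  ultimately have "S = UNIV" using clopen[of S] by blast
  thus ?thesis unfolding S_def by blast
qed

lemma trajectory_eq_line:
  fixes G R :: "'a::real_inner \<Rightarrow> 'a"
  assumes traj: "\<And>t. (\<gamma> has_vector_derivative G (\<gamma> t)) (at t)" "\<gamma> 0 = P0"
    and R: "(R has_derivative R') (at P0)"
    and near: "\<rho>0 > 0" "\<And>t z. norm z < \<rho>0 \<Longrightarrow> G (P0 + t *\<^sub>R R P0 + z) = R (P0 + z)"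
  shows "\<gamma> t = P0 + t *\<^sub>R R P0"
proof -
  obtain \<rho> L where \<rho>: "\<rho> > 0" and Lipschitz: "\<And>z. norm z < \<rho> \<Longrightarrow> norm (R (P0 + z) - R P0) \<le> L * norm z"
    using has_derivative_locally_Lipschitz[OF R] by metis
  define z where "z t = \<gamma> t - (P0 + t *\<^sub>R R P0)" for t
  have "((\<lambda>t. P0 + t *\<^sub>R R P0) has_vector_derivative R P0) (at t)" for t
    by (auto intro!: derivative_eq_intros)
  hence dz: "(z has_vector_derivative G (\<gamma> t) - R P0) (at t)" for t
    unfolding z_def[abs_def] by (intro derivative_intros traj(1))
  have Lz: "norm (G (\<gamma> t) - R P0) \<le> L * norm (z t)" if "norm (z t) < min \<rho> \<rho>0" for t
  proof -
    have "G (\<gamma> t) = R (P0 + z t)" using near(2)[of "z t" t] that by (simp add: z_def)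
    thus ?thesis using Lipschitz[of "z t"] that by simp
  qed
  have "z t = 0"
    by (rule vanishing_of_Lipschitz_ode[where \<rho> = "min \<rho> \<rho>0", OF dz _ _ Lz]) (use \<rho> near(1) traj(2) in \<open>simp_all add: z_def\<close>)
  thus ?thesis by (simp add: z_def)
qed

section \<open>Primitive integer directions\<close>

definition primitive_direction :: "real \<times> real \<Rightarrow> int \<times> int \<Rightarrow> bool" where
  "primitive_direction r ab \<longleftrightarrow> coprime (fst ab) (snd ab) \<and>
     (\<exists>s>0. real_of_int (fst ab) = s * fst r \<and> real_of_int (snd ab) = s * snd r)"

lemma prim_dir_eq_THE: "prim_dir p1 p2 x = (THE ab. primitive_direction (toric_reeb p1 p2 x) ab)"
  unfolding prim_dir_def primitive_direction_def ..

lemma Ints_if_coprime_multiples: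
  fixes u :: real and a b :: int
  assumes "coprime a b" "u * of_int a \<in> \<int>" "u * of_int b \<in> \<int>"
  shows "u \<in> \<int>"
proof -
  obtain m n where "m * a + n * b = 1"
    using bezout_int[of a b] assms(1) by (auto simp: coprime_iff_gcd_eq_1)
  hence "u = of_int m * (u * of_int a) + of_int n * (u * of_int b)"
    by (metis (mono_tags, opaque_lifting) distrib_left mult.commute mult.left_commute mult_1_right
        of_int_1 of_int_add of_int_mult)
  thus ?thesis using assms(2,3) by (metis Ints_add Ints_mult Ints_of_int)
qed

lemma coprime_proportional_eq:
  fixes a b a' b' :: int
  assumes "coprime a b" "coprime a' b'" "a * b' = a' * b"
  shows "\<bar>a\<bar> = \<bar>a'\<bar> \<and> \<bar>b\<bar> = \<bar>b'\<bar>"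
proof -
  have "a dvd a'" using assms(1) by (metis assms(3) coprime_dvd_mult_left_iff dvd_triv_left)
  moreover have "a' dvd a" using assms(2) by (metis assms(3) coprime_dvd_mult_left_iff dvd_triv_left)
  moreover have "b dvd b'"
    using assms(1) by (metis assms(3) coprime_commute coprime_dvd_mult_right_iff dvd_triv_right)
  moreover have "b' dvd b"
    using assms(2) by (metis assms(3) coprime_commute coprime_dvd_mult_right_iff dvd_triv_right)
  ultimately show ?thesis using zdvd_antisym_abs by blast
qed

lemma abs_eq_if_mult_nonneg: "\<bar>a\<bar> = \<bar>b\<bar> \<Longrightarrow> 0 \<le> a * b \<Longrightarrow> a = (b::int)"
  by (auto simp: abs_if zero_le_mult_iff split: if_splits)

lemma primitive_direction_unique:
  assumes "primitive_direction r ab" "primitive_direction r ab'"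
  shows "ab = ab'"
proof -
  obtain s s' where s: "s > 0" "s' > 0"
    and e: "real_of_int (fst ab) = s * fst r" "real_of_int (snd ab) = s * snd r"
      "real_of_int (fst ab') = s' * fst r" "real_of_int (snd ab') = s' * snd r"
    using assms unfolding primitive_direction_def by blast
  have "real_of_int (fst ab * snd ab') = real_of_int (fst ab' * snd ab)"
    using e by (simp add: algebra_simps)
  hence "\<bar>fst ab\<bar> = \<bar>fst ab'\<bar> \<and> \<bar>snd ab\<bar> = \<bar>snd ab'\<bar>"
    using assms unfolding primitive_direction_def by (intro coprime_proportional_eq) (simp_all only: of_int_eq_iff)
  moreover have "0 \<le> real_of_int (fst ab * fst ab')" "0 \<le> real_of_int (snd ab * snd ab')"
    using s unfolding of_int_mult e by (auto simp: zero_le_mult_iff mult_le_0_iff)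
  ultimately show ?thesis
    unfolding of_int_0_le_iff by (metis prod.expand abs_eq_if_mult_nonneg)
qed

lemma primitive_direction_exists:
  assumes "T > 0" "T * fst r \<in> \<int>" "T * snd r \<in> \<int>" "r \<noteq> (0, 0)"
  shows "\<exists>ab. primitive_direction r ab"
proof -
  obtain m n where m: "T * fst r = of_int m" and n: "T * snd r = of_int n"
    using assms(2,3) Ints_cases by metis
  have mn: "m \<noteq> 0 \<or> n \<noteq> 0" using m n assms(1,4) by (cases r) auto
  define d where "d = gcd m n"
  have dpos: "d > 0" using mn d_def by simp
  have "real_of_int (m div d) = (T / d) * fst r" "real_of_int (n div d) = (T / d) * snd r"
    using m n by (simp_all add: d_def real_of_int_div)
  moreover have "coprime (m div d) (n div d)" using mn d_def by (simp add: div_gcd_coprime)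
  moreover have "T / d > 0" using assms(1) dpos by simp
  ultimately have "primitive_direction r (m div d, n div d)"
    unfolding primitive_direction_def by auto
  thus ?thesis ..
qed

lemma primitive_direction_THE:
  assumes "T > 0" "T * fst r \<in> \<int>" "T * snd r \<in> \<int>" "r \<noteq> (0, 0)"
  shows "primitive_direction r (THE ab. primitive_direction r ab)"
  using primitive_direction_exists[OF assms] primitive_direction_unique by (metis theI)

section \<open>Rotation numbers of planar model paths\<close>

lemma vec2_eq_iff: "(v::'a^2) = w \<longleftrightarrow> v$1 = w$1 \<and> v$2 = w$2"
  by (simp add: vec_eq_iff forall_2)

lemma matrix_vector_mult_2:
  "(M::real^2^2) *v v = vector [M$1$1 * v$1 + M$1$2 * v$2, M$2$1 * v$1 + M$2$2 * v$2]"
  by (simp add: vec2_eq_iff matrix_vector_mult_def sum_2)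

lemma norm_vec2: "norm (v::real^2) = sqrt ((v$1)^2 + (v$2)^2)"
  by (simp add: norm_vec_def L2_set_def sum_2)

lemma continuous_on_vector2 [continuous_intros]:
  assumes "continuous_on S f" "continuous_on S g"
  shows "continuous_on S (\<lambda>t. vector [f t, g t] :: real^2)"
proof -
  have "(\<lambda>t. vector [f t, g t] :: real^2) = (\<lambda>t. f t *\<^sub>R axis 1 1 + g t *\<^sub>R axis 2 1)"
    by (simp add: fun_eq_iff vec2_eq_iff axis_def)
  show ?thesis unfolding \<open>?this\<close> by (intro continuous_intros assms)
qed

lemma matrix_vector_mult_2_eq_0:
  assumes "(M::real^2^2) *v v = 0" "M$1$1 * M$2$2 - M$1$2 * M$2$1 \<noteq> 0"
  shows "v = 0"
proof -
  have e: "M$1$1 * v$1 + M$1$2 * v$2 = 0" "M$2$1 * v$1 + M$2$2 * v$2 = 0"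
    using assms(1) unfolding matrix_vector_mult_2 by (simp_all add: vec2_eq_iff)
  have "(M$1$1 * M$2$2 - M$1$2 * M$2$1) * v$1 = M$2$2 * (M$1$1 * v$1 + M$1$2 * v$2) - M$1$2 * (M$2$1 * v$1 + M$2$2 * v$2)"
    "(M$1$1 * M$2$2 - M$1$2 * M$2$1) * v$2 = M$1$1 * (M$2$1 * v$1 + M$2$2 * v$2) - M$2$1 * (M$1$1 * v$1 + M$1$2 * v$2)"
    by (simp_all add: algebra_simps)
  thus ?thesis using assms(2) unfolding e by (simp add: vec2_eq_iff)
qed

lemma continuous_angle_exists:
  fixes u :: "real \<Rightarrow> real^2"
  assumes "continuous_on {0..T} u" "\<forall>t\<in>{0..T}. u t \<noteq> 0"
  shows "\<exists>\<theta>. continuous_on {0..T} \<theta> \<and> (\<forall>t\<in>{0..T}. u t = norm (u t) *\<^sub>R vector [cos (\<theta> t), sin (\<theta> t)])"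
proof -
  define f where "f t = complex_of_real (u t $ 1) + \<i> * complex_of_real (u t $ 2)" for t
  have "continuous_on {0..T} f" unfolding f_def
    by (intro continuous_intros continuous_on_compose2[OF continuous_on_of_real]
         continuous_on_compose2[OF bounded_linear_vec_nth[THEN linear_continuous_on]] assms(1)) auto
  moreover have "f t \<noteq> 0" if "t \<in> {0..T}" for t
    using assms(2) that unfolding f_def by (auto simp: complex_eq_iff vec2_eq_iff)
  ultimately obtain g where g: "continuous_on {0..T} g" "\<And>t. t \<in> {0..T} \<Longrightarrow> f t = exp (g t)"
    using continuous_logarithm_on_simply_connected[of "{0..T}" f]
      convex_imp_simply_connected[OF convex_real_interval(5)]
      convex_imp_locally_path_connected[OF convex_real_interval(5)] by metis
  have "u t = norm (u t) *\<^sub>R vector [cos (Im (g t)), sin (Im (g t))]" if t: "t \<in> {0..T}" for t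
  proof -
    have e: "u t $ 1 = exp (Re (g t)) * cos (Im (g t))" "u t $ 2 = exp (Re (g t)) * sin (Im (g t))"
      using arg_cong[OF g(2)[OF t], of Re] arg_cong[OF g(2)[OF t], of Im]
      unfolding f_def by (simp_all add: Re_exp Im_exp)
    have "norm (u t) = sqrt ((exp (Re (g t)))^2 * ((cos (Im (g t)))^2 + (sin (Im (g t)))^2))"
      unfolding norm_vec2 e by (simp only: power_mult_distrib distrib_left)
    hence "norm (u t) = exp (Re (g t))" by simp
    thus ?thesis by (simp add: vec2_eq_iff e)
  qed
  moreover have "continuous_on {0..T} (\<lambda>t. Im (g t))" by (intro continuous_intros g(1))
  ultimately show ?thesis by blast
qed

lemma rot_set_nonempty:
  assumes "v \<noteq> 0" "continuous_on {0..T} (\<lambda>t. \<Psi> t *v v)" "\<forall>t\<in>{0..T}. \<Psi> t *v v \<noteq> 0"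
  shows "rot_set \<Psi> T \<noteq> {}"
  using continuous_angle_exists[OF assms(2,3)] assms(1) unfolding rot_set_def by blast

lemma CZ_path_eq_even:
  assumes "real_of_int k \<in> rot_set \<Psi> T" "rot_set \<Psi> T \<subseteq> {k - 1 <..< k + 1}"
  shows "CZ_path \<Psi> T = 2 * k"
proof -
  have "j = k" if "real_of_int j \<in> rot_set \<Psi> T" for j
  proof -
    have "k - 1 < j" "j < k + 1" using assms(2) that by (auto simp flip: of_int_diff of_int_add)
    thus ?thesis by simp
  qed
  hence "(THE j::int. real_of_int j \<in> rot_set \<Psi> T) = k"
    using assms(1) by blast
  thus ?thesis unfolding CZ_path_def using assms(1) by auto
qed

lemma CZ_path_eq_odd:
  assumes "rot_set \<Psi> T \<noteq> {}" "rot_set \<Psi> T \<subseteq> {k <..< k + 1}"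
  shows "CZ_path \<Psi> T = 2 * k + 1"
proof -
  have no_int: "real_of_int j \<notin> rot_set \<Psi> T" for j
  proof
    assume "real_of_int j \<in> rot_set \<Psi> T"
    hence "real_of_int k < real_of_int j" "real_of_int j < real_of_int (k + 1)" using assms(2) by auto
    hence "k < j" "j < k + 1" by (simp_all only: of_int_less_iff)
    thus False by simp
  qed
  have "(SOME r. r \<in> rot_set \<Psi> T) \<in> rot_set \<Psi> T" using assms(1) by (simp add: some_in_eq)
  hence "\<lfloor>SOME r. r \<in> rot_set \<Psi> T\<rfloor> = k" using assms(2) by (auto simp: floor_eq_iff)
  thus ?thesis unfolding CZ_path_def using no_int by simp
qed

definition rot2 :: "real \<Rightarrow> real^2 \<Rightarrow> real^2" where
  "rot2 \<phi> v = vector [cos \<phi> * v$1 - sin \<phi> * v$2, sin \<phi> * v$1 + cos \<phi> * v$2]"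

lemma polar_eq_rot2:
  fixes v w :: "real^2"
  assumes "v = norm v *\<^sub>R vector [cos a, sin a]" "w = norm w *\<^sub>R vector [cos b, sin b]" "v \<noteq> 0"
  shows "w = (norm w / norm v) *\<^sub>R rot2 (b - a) v"
proof -
  have v: "v$1 = norm v * cos a" "v$2 = norm v * sin a"
    using arg_cong[OF assms(1), of "\<lambda>x. x$1"] arg_cong[OF assms(1), of "\<lambda>x. x$2"] by simp_all
  have "rot2 (b - a) v = norm v *\<^sub>R vector [cos a * cos (b - a) - sin a * sin (b - a),
      sin a * cos (b - a) + cos a * sin (b - a)]"
    unfolding rot2_def v by (simp add: vec2_eq_iff algebra_simps)
  also have "\<dots> = norm v *\<^sub>R vector [cos b, sin b]"
    unfolding cos_add[symmetric] sin_add[symmetric] by simp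
  finally have "rot2 (b - a) v = norm v *\<^sub>R vector [cos b, sin b]" .
  thus ?thesis using assms(2,3) by simp
qed

lemma rot2_2pi_int: "rot2 (2 * pi * of_int m) v = v"
  unfolding rot2_def by (simp add: vec2_eq_iff)

lemma rot2_pi: "rot2 pi v = - v" "rot2 (- pi) v = - v"
  unfolding rot2_def by (simp_all add: vec2_eq_iff)

lemma cross_scaled_rot2:
  "w = c *\<^sub>R rot2 \<phi> v \<Longrightarrow> v$1 * w$2 - v$2 * w$1 = c * sin \<phi> * ((v$1)^2 + (v$2)^2)"
  unfolding rot2_def by (simp add: algebra_simps power2_eq_square)

lemma continuous_on_avoiding_stays_between:
  fixes f :: "real \<Rightarrow> real"
  assumes "continuous_on {a..b} f" "a \<le> b" "l < f a" "f a < u" "\<And>t. t \<in> {a..b} \<Longrightarrow> f t \<noteq> l \<and> f t \<noteq> u"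
  shows "l < f b \<and> f b < u"
proof (rule ccontr)
  assume "\<not> (l < f b \<and> f b < u)"
  hence "f b \<le> l \<or> u \<le> f b" by linarith
  then obtain t where "a \<le> t" "t \<le> b" "f t = l \<or> f t = u"
  proof
    assume "f b \<le> l"
    thus thesis using IVT2'[of f b l a] assms(1-3) that by force
  next
    assume "u \<le> f b"
    thus thesis using IVT'[of f a u b] assms(1,2,4) that by force
  qed
  thus False using assms(5)[of t] by auto
qed

lemma rot_set_elim_rot2:
  assumes "r \<in> rot_set \<Psi> T" "\<And>w. \<Psi> 0 *v w = w" "T \<ge> 0"
  obtains v \<Delta> where "v \<noteq> 0" "continuous_on {0..T} \<Delta>" "\<Delta> 0 = 0" "r = \<Delta> T / (2 * pi)"
    "\<And>t. t \<in> {0..T} \<Longrightarrow> \<Psi> t *v v = (norm (\<Psi> t *v v) / norm v) *\<^sub>R rot2 (\<Delta> t) v"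
proof -
  obtain v \<theta> where v: "v \<noteq> 0" and ct: "continuous_on {0..T} \<theta>"
    and polar: "\<forall>t\<in>{0..T}. \<Psi> t *v v = norm (\<Psi> t *v v) *\<^sub>R vector [cos (\<theta> t), sin (\<theta> t)]"
    and r: "r = (\<theta> T - \<theta> 0) / (2 * pi)"
    using assms(1) unfolding rot_set_def by blast
  have "v = norm v *\<^sub>R vector [cos (\<theta> 0), sin (\<theta> 0)]" using polar[rule_format, of 0] assms(2,3) by simp
  hence "\<Psi> t *v v = (norm (\<Psi> t *v v) / norm v) *\<^sub>R rot2 (\<theta> t - \<theta> 0) v" if "t \<in> {0..T}" for t
    using polar that v by (intro polar_eq_rot2) auto
  moreover have "continuous_on {0..T} (\<lambda>t. \<theta> t - \<theta> 0)" by (intro continuous_intros ct)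
  ultimately show ?thesis using that[of v "\<lambda>t. \<theta> t - \<theta> 0"] v r by simp
qed

lemma sum_weighted_squares_pos: "k > 0 \<Longrightarrow> (a, b) \<noteq> (0, 0) \<Longrightarrow> k * a^2 + b^2 / k > (0::real)"
  by (cases "a = 0") (auto intro: add_pos_nonneg)

definition elliptic_path :: "real \<Rightarrow> real \<Rightarrow> real \<Rightarrow> real^2^2" where
  "elliptic_path k \<omega> t =
     vector [vector [cos (\<omega> * t), - sin (\<omega> * t) / k], vector [k * sin (\<omega> * t), cos (\<omega> * t)]]"

definition hyperbolic_path :: "real \<Rightarrow> real \<Rightarrow> real \<Rightarrow> real^2^2" where
  "hyperbolic_path k \<omega> t =
     vector [vector [cosh (\<omega> * t), sinh (\<omega> * t) / k], vector [k * sinh (\<omega> * t), cosh (\<omega> * t)]]"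

lemma elliptic_path_mult: "elliptic_path k \<omega> t *v v =
    vector [cos (\<omega> * t) * v$1 - sin (\<omega> * t) / k * v$2, k * sin (\<omega> * t) * v$1 + cos (\<omega> * t) * v$2]"
  by (simp add: elliptic_path_def matrix_vector_mult_2)

lemma hyperbolic_path_mult: "hyperbolic_path k \<omega> t *v v =
    vector [cosh (\<omega> * t) * v$1 + sinh (\<omega> * t) / k * v$2, k * sinh (\<omega> * t) * v$1 + cosh (\<omega> * t) * v$2]"
  by (simp add: hyperbolic_path_def matrix_vector_mult_2)

lemma elliptic_path_nonzero: "k \<noteq> 0 \<Longrightarrow> v \<noteq> 0 \<Longrightarrow> elliptic_path k \<omega> t *v v \<noteq> 0"
  using matrix_vector_mult_2_eq_0[of "elliptic_path k \<omega> t" v]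
  by (auto simp: elliptic_path_def power2_eq_square[symmetric])

lemma hyperbolic_path_nonzero: "k \<noteq> 0 \<Longrightarrow> v \<noteq> 0 \<Longrightarrow> hyperbolic_path k \<omega> t *v v \<noteq> 0"
  using matrix_vector_mult_2_eq_0[of "hyperbolic_path k \<omega> t" v] hyperbolic_pythagoras[of "\<omega> * t"]
  by (auto simp: hyperbolic_path_def power2_eq_square[symmetric])

lemma elliptic_path_cross:
  "k \<noteq> 0 \<Longrightarrow> v$1 * (elliptic_path k \<omega> t *v v)$2 - v$2 * (elliptic_path k \<omega> t *v v)$1
     = sin (\<omega> * t) * (k * (v$1)^2 + (v$2)^2 / k)"
  unfolding elliptic_path_mult by (simp add: field_simps power2_eq_square)

lemma elliptic_path_no_positive_eigenvector:
  assumes "elliptic_path k \<omega> t *v v = c *\<^sub>R v" "c > 0" "k > 0" "0 < \<omega> * t" "\<omega> * t < 2 * pi"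
  shows "v = 0"
proof (rule ccontr)
  assume v: "v \<noteq> 0"
  have "sin (\<omega> * t) * (k * (v$1)^2 + (v$2)^2 / k) = 0"
    using elliptic_path_cross[of k v \<omega> t] assms(1,3) by (simp add: algebra_simps)
  moreover have "k * (v$1)^2 + (v$2)^2 / k > 0"
    using v assms(3) by (intro sum_weighted_squares_pos) (auto simp: vec2_eq_iff)
  ultimately obtain i :: int where i: "\<omega> * t = of_int i * pi" by (auto simp: sin_zero_iff_int2)
  hence "0 < i" "i < 2" using assms(4,5) by (auto simp: mult_less_cancel_right zero_less_mult_iff)
  hence "\<omega> * t = pi" using i by simp
  hence "- v = c *\<^sub>R v" using assms(1) by (simp add: elliptic_path_mult vec2_eq_iff)
  hence "(c + 1) *\<^sub>R v = 0" by (simp add: scaleR_add_left flip: \<open>- v = c *\<^sub>R v\<close>)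
  thus False using v assms(2) by simp
qed

lemma hyperbolic_path_no_negative_eigenvector:
  assumes "hyperbolic_path k \<omega> t *v v = c *\<^sub>R v" "c < 0" "k > 0"
  shows "v = 0"
proof -
  define x y where "x = v$1" "y = v$2 / k"
  define ch sh where "ch = cosh (\<omega> * t)" "sh = sinh (\<omega> * t)"
  have h: "ch * v$1 + sh / k * v$2 = c * v$1" "k * sh * v$1 + ch * v$2 = c * v$2"
    using arg_cong[OF assms(1), of "\<lambda>w. w$1"] arg_cong[OF assms(1), of "\<lambda>w. w$2"]
    unfolding hyperbolic_path_mult ch_sh_def by simp_all
  have e: "ch * x + sh * y = c * x" "sh * x + ch * y = c * y"
    using h assms(3) unfolding x_y_def by (simp_all add: field_simps)
  have "c * (x^2 + y^2) = x * (ch * x + sh * y) + y * (sh * x + ch * y)"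
    unfolding e by (simp add: algebra_simps power2_eq_square)
  also have "\<dots> = ch * (x^2 + y^2) + sh * (2 * x * y)" by (simp add: algebra_simps power2_eq_square)
  also have "\<dots> \<ge> (ch - \<bar>sh\<bar>) * (x^2 + y^2)"
  proof -
    have "\<bar>2 * x * y\<bar> \<le> x^2 + y^2"
      using sum_squares_bound[of x y] sum_squares_bound[of x "- y"] by (simp add: abs_le_iff)
    hence "\<bar>sh * (2 * x * y)\<bar> \<le> \<bar>sh\<bar> * (x^2 + y^2)"
      unfolding abs_mult[of sh] by (intro mult_left_mono) simp_all
    thus ?thesis by (simp add: abs_le_iff algebra_simps)
  qed
  finally have "(ch - \<bar>sh\<bar> - c) * (x^2 + y^2) \<le> 0" by (simp add: algebra_simps)
  moreover have "ch - \<bar>sh\<bar> - c > 0"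
    using sinh_less_cosh_real[of "\<omega> * t"] sinh_less_cosh_real[of "- (\<omega> * t)"] assms(2)
    unfolding ch_sh_def by (simp add: abs_if)
  ultimately have "x^2 + y^2 \<le> 0" by (simp add: mult_le_0_iff)
  hence "x = 0" "y = 0" by (simp_all add: sum_power2_le_zero_iff)
  thus ?thesis using assms(3) unfolding x_y_def by (simp add: vec2_eq_iff)
qed

lemma rot_set_elliptic_path:
  assumes r: "r \<in> rot_set (elliptic_path k \<omega>) T"
    and k: "k > 0" and \<omega>: "\<omega> > 0" and T: "T > 0" "\<omega> * T < 2 * pi"
  shows "0 < r \<and> r < 1"
proof -
  obtain v \<Delta> where v: "v \<noteq> 0" and c\<Delta>: "continuous_on {0..T} \<Delta>" and "\<Delta> 0 = 0" "r = \<Delta> T / (2 * pi)"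
    and rot: "\<And>t. t \<in> {0..T} \<Longrightarrow> elliptic_path k \<omega> t *v v
        = (norm (elliptic_path k \<omega> t *v v) / norm v) *\<^sub>R rot2 (\<Delta> t) v"
    using rot_set_elim_rot2[OF r] T(1) by (auto simp: elliptic_path_mult vec2_eq_iff)
  have scale_pos: "norm (elliptic_path k \<omega> t *v v) / norm v > 0" for t
    using elliptic_path_nonzero[of k v] k v by simp
  \<comment> \<open>The orbit of \<open>v\<close> turns positively at first and never completes a full turn before time \<open>T\<close>.\<close>
  have no_turn: "\<Delta> t \<noteq> 2 * pi * of_int m" if "t \<in> {0<..T}" for t m
  proof
    assume "\<Delta> t = 2 * pi * of_int m"
    hence "elliptic_path k \<omega> t *v v = (norm (elliptic_path k \<omega> t *v v) / norm v) *\<^sub>R v"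
      using rot[of t] that by (simp add: rot2_2pi_int)
    moreover have "\<omega> * t < 2 * pi" using that T \<omega> by (smt (verit) greaterThanAtMost_iff mult_left_mono)
    ultimately show False
      using elliptic_path_no_positive_eigenvector[OF _ scale_pos k] that \<omega> v by simp
  qed
  obtain d where d: "d > 0" "\<And>t. t \<in> {0..T} \<Longrightarrow> \<bar>t\<bar> < d \<Longrightarrow> \<bar>\<Delta> t\<bar> < pi"
    using c\<Delta> T(1) \<open>\<Delta> 0 = 0\<close> unfolding continuous_on_iff
    by (metis atLeastAtMost_iff dist_real_def diff_zero less_eq_real_def pi_gt_zero)
  define t1 where "t1 = min T (min (pi / (2 * \<omega>)) (d / 2))"
  have "t1 \<le> pi / (2 * \<omega>)" "t1 \<le> d / 2" "t1 \<le> T" "0 < t1"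
    unfolding t1_def using T(1) d(1) \<omega> by auto
  moreover have "\<omega> * (pi / (2 * \<omega>)) < pi" using \<omega> by simp
  ultimately have t1: "0 < t1" "t1 \<le> T" "t1 < d" "\<omega> * t1 < pi"
    using \<omega> d(1) by (auto intro: le_less_trans[OF mult_left_mono])
  have "0 < sin (\<omega> * t1) * (k * (v$1)^2 + (v$2)^2 / k)"
    using t1 \<omega> k v by (intro mult_pos_pos sin_gt_zero sum_weighted_squares_pos) (auto simp: vec2_eq_iff)
  also have "\<dots> = (norm (elliptic_path k \<omega> t1 *v v) / norm v) * (sin (\<Delta> t1) * ((v$1)^2 + (v$2)^2))"
    using elliptic_path_cross[of k v \<omega> t1] cross_scaled_rot2[OF rot[of t1]] t1 k by simp
  finally have "0 < sin (\<Delta> t1) * ((v$1)^2 + (v$2)^2)" by (rule zero_less_mult_pos[OF _ scale_pos])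
  hence "sin (\<Delta> t1) > 0" using sum_power2_ge_zero[of "v$1" "v$2"] by (auto simp: zero_less_mult_iff)
  hence "0 < \<Delta> t1" "\<Delta> t1 < 2 * pi"
    using d(2)[of t1] t1 sin_ge_zero[of "- \<Delta> t1"] by (auto simp: abs_less_iff not_less[symmetric])
  hence "0 < \<Delta> T \<and> \<Delta> T < 2 * pi"
    using continuous_on_avoiding_stays_between[of t1 T \<Delta> 0 "2 * pi"] no_turn[of _ 0] no_turn[of _ 1] t1
      continuous_on_subset[OF c\<Delta>] by fastforce
  thus ?thesis using \<open>r = \<Delta> T / (2 * pi)\<close> by (simp add: divide_less_eq)
qed

lemma CZ_path_elliptic_path:
  assumes "k > 0" "\<omega> > 0" "T > 0" "\<omega> * T < 2 * pi"
  shows "CZ_path (elliptic_path k \<omega>) T = 1"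
proof -
  have e1: "elliptic_path k \<omega> t *v vector [1, 0] = vector [cos (\<omega> * t), k * sin (\<omega> * t)]" for t
    by (simp add: elliptic_path_mult)
  have ne: "rot_set (elliptic_path k \<omega>) T \<noteq> {}"
  proof (rule rot_set_nonempty)
    show "(vector [1, 0] :: real^2) \<noteq> 0" by (simp add: vec2_eq_iff)
    show "continuous_on {0..T} (\<lambda>t. elliptic_path k \<omega> t *v vector [1, 0])"
      unfolding e1 by (intro continuous_intros)
    show "\<forall>t\<in>{0..T}. elliptic_path k \<omega> t *v vector [1, 0] \<noteq> 0"
      using elliptic_path_nonzero[of k "vector [1, 0]"] assms(1) by (auto simp: vec2_eq_iff)
  qed
  moreover have "rot_set (elliptic_path k \<omega>) T \<subseteq> {real_of_int 0 <..< real_of_int 0 + 1}"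
    using rot_set_elliptic_path[OF _ assms] by auto
  ultimately show ?thesis using CZ_path_eq_odd[OF ne, of 0] by simp
qed

lemma rot_set_hyperbolic_path:
  assumes r: "r \<in> rot_set (hyperbolic_path k \<omega>) T" and k: "k > 0" and T: "T \<ge> 0"
  shows "\<bar>r\<bar> < 1 / 2"
proof -
  obtain v \<Delta> where v: "v \<noteq> 0" and c\<Delta>: "continuous_on {0..T} \<Delta>" and "\<Delta> 0 = 0" "r = \<Delta> T / (2 * pi)"
    and rot: "\<And>t. t \<in> {0..T} \<Longrightarrow> hyperbolic_path k \<omega> t *v v
        = (norm (hyperbolic_path k \<omega> t *v v) / norm v) *\<^sub>R rot2 (\<Delta> t) v"
    using rot_set_elim_rot2[OF r _ T] by (auto simp: hyperbolic_path_mult vec2_eq_iff)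
  \<comment> \<open>A half turn would make \<open>v\<close> an eigenvector with negative eigenvalue.\<close>
  have "\<Delta> t \<notin> {pi, - pi}" if "t \<in> {0..T}" for t
  proof
    have pos: "norm (hyperbolic_path k \<omega> t *v v) / norm v > 0"
      using hyperbolic_path_nonzero[of k v] k v by simp
    assume "\<Delta> t \<in> {pi, - pi}"
    hence "hyperbolic_path k \<omega> t *v v = (- (norm (hyperbolic_path k \<omega> t *v v) / norm v)) *\<^sub>R v"
      using rot[OF that] by (auto simp: rot2_pi)
    hence "v = 0" by (rule hyperbolic_path_no_negative_eigenvector) (use pos k in simp_all)
    thus False using v by simp
  qed
  hence "- pi < \<Delta> T \<and> \<Delta> T < pi"
    using continuous_on_avoiding_stays_between[OF c\<Delta> T, of "- pi" pi] \<open>\<Delta> 0 = 0\<close> by simp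
  thus ?thesis using \<open>r = \<Delta> T / (2 * pi)\<close> by (simp add: abs_less_iff divide_less_eq)
qed

lemma zero_in_rot_set_hyperbolic_path:
  assumes "k > 0"
  shows "0 \<in> rot_set (hyperbolic_path k \<omega>) T"
proof -
  define v :: "real^2" where "v = vector [1, k]"
  define u :: "real^2" where "u = vector [cos (arctan k), sin (arctan k)]"
  have "sqrt (1 + k^2) > 0" by (simp add: add_pos_nonneg)
  moreover have "norm v = sqrt (1 + k^2)" unfolding v_def norm_vec2 by simp
  ultimately have v: "v \<noteq> 0" "v = norm v *\<^sub>R u"
    unfolding u_def cos_arctan sin_arctan by (auto simp: v_def vec2_eq_iff)
  have "hyperbolic_path k \<omega> t *v v = exp (\<omega> * t) *\<^sub>R v" for t
  proof -
    have "cosh (\<omega> * t) + sinh (\<omega> * t) = exp (\<omega> * t)" by (rule cosh_plus_sinh)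
    thus ?thesis using assms unfolding hyperbolic_path_mult v_def
      by (simp add: vec2_eq_iff algebra_simps flip: distrib_left)
  qed
  hence w: "hyperbolic_path k \<omega> t *v v = (exp (\<omega> * t) * norm v) *\<^sub>R u" for t
    using arg_cong[OF v(2), of "\<lambda>x. exp (\<omega> * t) *\<^sub>R x"] by simp
  have "norm u = 1" unfolding u_def norm_vec2 by simp
  hence "hyperbolic_path k \<omega> t *v v = norm (hyperbolic_path k \<omega> t *v v) *\<^sub>R u" for t
    unfolding w by simp
  hence "\<forall>t\<in>{0..T}. hyperbolic_path k \<omega> t *v v =
      norm (hyperbolic_path k \<omega> t *v v) *\<^sub>R vector [cos ((\<lambda>_. arctan k) t), sin ((\<lambda>_. arctan k) t)]"
    unfolding u_def by simp
  moreover have "continuous_on {0..T} (\<lambda>_::real. arctan k)" by simp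
  moreover have "(0::real) = ((\<lambda>_. arctan k) T - (\<lambda>_. arctan k) 0) / (2 * pi)" by simp
  ultimately show ?thesis unfolding rot_set_def using v(1) by blast
qed

lemma CZ_path_hyperbolic_path:
  assumes "k > 0" "T \<ge> 0"
  shows "CZ_path (hyperbolic_path k \<omega>) T = 0"
proof -
  have "rot_set (hyperbolic_path k \<omega>) T \<subseteq> {real_of_int 0 - 1 <..< real_of_int 0 + 1}"
    using rot_set_hyperbolic_path[OF _ assms] by (force simp: abs_less_iff)
  thus ?thesis using CZ_path_eq_even[of 0] zero_in_rot_set_hyperbolic_path[OF assms(1)] by simp
qed

section \<open>The perturbed form near a center\<close>

lemma open_slab: "open {P::real^3. \<bar>P$1 - x0\<bar> < \<delta>}"
  by (rule open_Collect_less) (intro continuous_intros)+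

text \<open>Solving \<open>\<alpha>(R) = 1\<close>, \<open>\<iota>\<^sub>R d\<alpha> = 0\<close> for a form \<open>E (0, p1, p2)\<close> whose differential has
  entries \<open>E A1, E A2, E G\<close>; \<open>Q = p1 A2 - p2 A1\<close> plays the role of \<open>Q(x)\<close>.\<close>

lemma reeb_equations_solution:
  fixes E Q p1 p2 A1 A2 G R1 R2 R3 :: real
  assumes "E \<noteq> 0" "p1 * A2 - p2 * A1 = Q" "Q \<noteq> 0"
    and "R2 * A1 + R3 * A2 = 0" "R1 * A1 + R3 * G = 0" "R1 * A2 - R2 * G = 0" "E * (p1 * R2 + p2 * R3) = 1"
  shows "R1 = G / (E * Q)" "R2 = A2 / (E * Q)" "R3 = - A1 / (E * Q)"
proof -
  have n: "p1 * R2 + p2 * R3 = 1 / E" using assms(1,7) by (simp add: field_simps)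
  have "R1 * Q = p1 * (R1 * A2 - R2 * G) - p2 * (R1 * A1 + R3 * G) + G * (p1 * R2 + p2 * R3)"
    "R2 * Q = - p2 * (R2 * A1 + R3 * A2) + A2 * (p1 * R2 + p2 * R3)"
    "R3 * Q = p1 * (R2 * A1 + R3 * A2) - A1 * (p1 * R2 + p2 * R3)"
    unfolding assms(2)[symmetric] by (simp_all add: algebra_simps)
  hence "R1 * Q = G / E" "R2 * Q = A2 / E" "R3 * Q = - A1 / E"
    unfolding assms(4-6) n by simp_all
  thus "R1 = G / (E * Q)" "R2 = A2 / (E * Q)" "R3 = - A1 / (E * Q)"
    using assms(1,3) by (simp_all add: field_simps)
qed

text \<open>The data of the theorem near a center \<open>x0\<close>: \<open>(a, b)\<close> is the primitive direction
  \<open>(a0, b0)\<close> of the Reeb field on \<open>T\<^sub>x\<^sub>0\<close>, equal to \<open>s R(x0)\<close>; \<open>e\<close> is \<open>\<epsilon>\<close>, and \<open>\<alpha>\<close>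
  is \<open>\<lambda>\<^sub>\<epsilon>\<^sub>,\<^sub>L\<close>, of which only the restriction to the slab \<open>\<bar>x - x0\<bar> < \<delta>\<close> matters;
  there all other bumps vanish.\<close>

locale perturbed_center =
  fixes p1 p2 :: "real \<Rightarrow> real" and x0 \<delta> s e :: real and a b :: int and \<alpha> :: "real^3 \<Rightarrow> real^3"
  assumes \<delta>_pos: "\<delta> > 0"
    and Q_pos: "\<And>x. \<bar>x - x0\<bar> < \<delta> \<Longrightarrow> Qf p1 p2 x > 0"
    and DERIV_p1: "\<And>x. \<bar>x - x0\<bar> < \<delta> \<Longrightarrow> DERIV p1 x :> deriv p1 x"
    and DERIV_p2: "\<And>x. \<bar>x - x0\<bar> < \<delta> \<Longrightarrow> DERIV p2 x :> deriv p2 x"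
    and DERIV_deriv_p1: "DERIV (deriv p1) x0 :> deriv (deriv p1) x0"
    and DERIV_deriv_p2: "DERIV (deriv p2) x0 :> deriv (deriv p2) x0"
    and coprime_ab: "coprime a b" and s_pos: "s > 0"
    and a_eq: "real_of_int a = s * (deriv p2 x0 / Qf p1 p2 x0)"
    and b_eq: "real_of_int b = s * (- deriv p1 x0 / Qf p1 p2 x0)"
    and alpha_near: "\<And>P. \<bar>P$1 - x0\<bar> < \<delta> \<Longrightarrow> \<alpha> P =
      exp (e * ((1 - (P$1 - x0)^2) * cos (2 * pi * (- real_of_int b * P$2 + real_of_int a * P$3))))
        *\<^sub>R vector [0, p1 (P$1), p2 (P$1)]"
begin

abbreviation a0 :: real where "a0 \<equiv> real_of_int a"
abbreviation b0 :: real where "b0 \<equiv> real_of_int b"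
abbreviation "slab \<equiv> {P::real^3. \<bar>P$1 - x0\<bar> < \<delta>}"

definition phase :: "real^3 \<Rightarrow> real" where "phase P = - b0 * P$2 + a0 * P$3"
definition F :: "real^3 \<Rightarrow> real" where "F P = (1 - (P$1 - x0)^2) * cos (2 * pi * phase P)"

definition F_x :: "real^3 \<Rightarrow> real" where "F_x P = e * (- 2 * (P$1 - x0)) * cos (2 * pi * phase P)"
definition F_phase :: "real^3 \<Rightarrow> real" where
  "F_phase P = e * (1 - (P$1 - x0)^2) * (- (2 * pi) * sin (2 * pi * phase P))"

definition reeb_field :: "real^3 \<Rightarrow> real^3" where
  "reeb_field P = (exp (- (e * F P)) / Qf p1 p2 (P$1)) *\<^sub>R vector [F_phase P * (b0 * p2 (P$1) + a0 * p1 (P$1)),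
      F_x P * p2 (P$1) + deriv p2 (P$1), - (F_x P * p1 (P$1) + deriv p1 (P$1))]"

lemma alpha_slab: "P \<in> slab \<Longrightarrow> \<alpha> P = exp (e * F P) *\<^sub>R vector [0, p1 (P$1), p2 (P$1)]"
  using alpha_near unfolding F_def phase_def by simp

lemma has_derivative_phase: "(phase has_derivative (\<lambda>h. - b0 * h$2 + a0 * h$3)) (at P)"
  unfolding phase_def by (auto intro!: derivative_eq_intros)

lemma has_derivative_F: "(F has_derivative (\<lambda>h. (- 2 * (P$1 - x0)) * cos (2 * pi * phase P) * h$1 +
     (1 - (P$1 - x0)^2) * (- (2 * pi) * sin (2 * pi * phase P)) * (- b0 * h$2 + a0 * h$3))) (at P)"
  unfolding F_def
  by (rule derivative_eq_intros has_derivative_phase refl)+ (simp add: fun_eq_iff algebra_simps phase_def)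

lemma has_derivative_exp_F_times:
  assumes "DERIV f (P$1) :> f'"
  shows "((\<lambda>y. exp (e * F y) * f (y$1)) has_derivative
    (\<lambda>h. exp (e * F P) * ((F_x P * h$1 + F_phase P * (- b0 * h$2 + a0 * h$3)) * f (P$1) + h$1 * f'))) (at P)"
  by (rule derivative_eq_intros has_derivative_F has_derivative_comp_vec_nth[OF assms] refl)+
    (simp add: fun_eq_iff algebra_simps F_x_def F_phase_def)

lemma has_derivative_alpha:
  assumes "P \<in> slab"
  shows "((\<lambda>y. \<alpha> y $ 1) has_derivative (\<lambda>h. 0)) (at P)"
    and "((\<lambda>y. \<alpha> y $ 2) has_derivative (\<lambda>h. exp (e * F P) *
      ((F_x P * h$1 + F_phase P * (- b0 * h$2 + a0 * h$3)) * p1 (P$1) + h$1 * deriv p1 (P$1)))) (at P)"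
    and "((\<lambda>y. \<alpha> y $ 3) has_derivative (\<lambda>h. exp (e * F P) *
      ((F_x P * h$1 + F_phase P * (- b0 * h$2 + a0 * h$3)) * p2 (P$1) + h$1 * deriv p2 (P$1)))) (at P)"
proof -
  note transform = has_derivative_transform_within_open[OF _ open_slab assms]
  show "((\<lambda>y. \<alpha> y $ 1) has_derivative (\<lambda>h. 0)) (at P)"
    by (rule transform[OF has_derivative_const]) (simp add: alpha_slab)
  show "((\<lambda>y. \<alpha> y $ 2) has_derivative (\<lambda>h. exp (e * F P) *
      ((F_x P * h$1 + F_phase P * (- b0 * h$2 + a0 * h$3)) * p1 (P$1) + h$1 * deriv p1 (P$1)))) (at P)"
    by (rule transform[OF has_derivative_exp_F_times[OF DERIV_p1]]) (use assms in \<open>simp_all add: alpha_slab\<close>)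
  show "((\<lambda>y. \<alpha> y $ 3) has_derivative (\<lambda>h. exp (e * F P) *
      ((F_x P * h$1 + F_phase P * (- b0 * h$2 + a0 * h$3)) * p2 (P$1) + h$1 * deriv p2 (P$1)))) (at P)"
    by (rule transform[OF has_derivative_exp_F_times[OF DERIV_p2]]) (use assms in \<open>simp_all add: alpha_slab\<close>)
qed

lemma dform_slab:
  assumes "P \<in> slab"
  defines "E \<equiv> exp (e * F P)"
  defines "A1 \<equiv> F_x P * p1 (P$1) + deriv p1 (P$1)" and "A2 \<equiv> F_x P * p2 (P$1) + deriv p2 (P$1)"
    and "G \<equiv> F_phase P * (b0 * p2 (P$1) + a0 * p1 (P$1))"
  shows "dform \<alpha> P 1 1 = 0" "dform \<alpha> P 2 2 = 0" "dform \<alpha> P 3 3 = 0"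
    "dform \<alpha> P 1 2 = E * A1" "dform \<alpha> P 2 1 = - E * A1"
    "dform \<alpha> P 1 3 = E * A2" "dform \<alpha> P 3 1 = - E * A2"
    "dform \<alpha> P 3 2 = E * G" "dform \<alpha> P 2 3 = - E * G"
  unfolding dform_def E_def A1_def A2_def G_def
    frechet_derivative_at[OF has_derivative_alpha(1)[OF assms(1)], symmetric]
    frechet_derivative_at[OF has_derivative_alpha(2)[OF assms(1)], symmetric]
    frechet_derivative_at[OF has_derivative_alpha(3)[OF assms(1)], symmetric]
  by (auto simp: axis_def algebra_simps)

lemma reeb_eq_reeb_field:
  assumes P: "P \<in> slab"
  shows "reeb \<alpha> P = reeb_field P"
proof -
  define E where "E = exp (e * F P)"
  define A1 where "A1 = F_x P * p1 (P$1) + deriv p1 (P$1)"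
  define A2 where "A2 = F_x P * p2 (P$1) + deriv p2 (P$1)"
  define G where "G = F_phase P * (b0 * p2 (P$1) + a0 * p1 (P$1))"
  define Q where "Q = Qf p1 p2 (P$1)"
  have Q: "Q > 0" using Q_pos P unfolding Q_def by simp
  have E: "E > 0" unfolding E_def by simp
  have QA: "p1 (P$1) * A2 - p2 (P$1) * A1 = Q" unfolding A1_def A2_def Q_def Qf_def by (simp add: algebra_simps)
  have R: "reeb_field P = vector [G / (E * Q), A2 / (E * Q), - A1 / (E * Q)]"
    unfolding reeb_field_def E_def Q_def G_def A1_def A2_def by (simp add: vec_eq_iff forall_3 exp_minus field_simps)
  have reeb_iff: "(\<alpha> P \<bullet> R = 1 \<and> (\<forall>j. (\<Sum>i\<in>UNIV. R $ i * dform \<alpha> P i j) = 0)) \<longleftrightarrow>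
      E * (p1 (P$1) * R$2 + p2 (P$1) * R$3) = 1 \<and> - E * (R$2 * A1 + R$3 * A2) = 0 \<and>
      E * (R$1 * A1 + R$3 * G) = 0 \<and> E * (R$1 * A2 - R$2 * G) = 0" for R
    unfolding alpha_slab[OF P, folded E_def] forall_3 sum_3 dform_slab[OF P, folded E_def A1_def A2_def G_def]
    by (simp add: inner_vec_def sum_3 algebra_simps)
  show ?thesis unfolding reeb_def
  proof (rule the_equality)
    have "E * (p1 (P$1) * (A2 / (E * Q)) + p2 (P$1) * (- A1 / (E * Q))) = (p1 (P$1) * A2 - p2 (P$1) * A1) / Q"
      using E Q by (simp add: field_simps)
    thus "\<alpha> P \<bullet> reeb_field P = 1 \<and> (\<forall>j. (\<Sum>i\<in>UNIV. reeb_field P $ i * dform \<alpha> P i j) = 0)"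
      unfolding reeb_iff R QA using E Q by (simp add: field_simps)
  next
    fix R assume "\<alpha> P \<bullet> R = 1 \<and> (\<forall>j. (\<Sum>i\<in>UNIV. R $ i * dform \<alpha> P i j) = 0)"
    hence "E * (p1 (P$1) * R$2 + p2 (P$1) * R$3) = 1" "R$2 * A1 + R$3 * A2 = 0"
      "R$1 * A1 + R$3 * G = 0" "R$1 * A2 - R$2 * G = 0"
      unfolding reeb_iff using E by auto
    thus "R = reeb_field P"
      unfolding R using reeb_equations_solution[OF _ QA] E Q by (simp add: vec_eq_iff forall_3)
  qed
qed

definition Q0 :: real where "Q0 = Qf p1 p2 x0"
definition dQ0 :: real where "dQ0 = p1 x0 * deriv (deriv p2) x0 - p2 x0 * deriv (deriv p1) x0"

lemma Q0_pos: "Q0 > 0" unfolding Q0_def using Q_pos[of x0] \<delta>_pos by simp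

lemma DERIV_Qf: "DERIV (Qf p1 p2) x0 :> dQ0"
proof -
  have d: "DERIV p1 x0 :> deriv p1 x0" "DERIV p2 x0 :> deriv p2 x0" using DERIV_p1 DERIV_p2 \<delta>_pos by auto
  have "((\<lambda>x. p1 x * deriv p2 x - p2 x * deriv p1 x) has_real_derivative
     (deriv p1 x0 * deriv p2 x0 + p1 x0 * deriv (deriv p2) x0 - (deriv p2 x0 * deriv p1 x0 + p2 x0 * deriv (deriv p1) x0))) (at x0)"
    by (rule derivative_eq_intros d DERIV_deriv_p1 DERIV_deriv_p2 refl)+ (simp add: algebra_simps)
  thus ?thesis unfolding Qf_def[abs_def] dQ0_def by (simp add: algebra_simps)
qed

text \<open>The derivative of the Reeb field at a point of \<open>T\<^sub>x\<^sub>0\<close> where \<open>cos (2 \<pi> phase) = \<sigma>\<close>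
  and \<open>sin (2 \<pi> phase) = 0\<close>.\<close>

definition dreeb :: "real \<Rightarrow> real^3 \<Rightarrow> real^3" where
  "dreeb \<sigma> h = (exp (- (e * \<sigma>)) / Q0) *\<^sub>R
      vector [e * (- 4 * pi^2 * \<sigma>) * (- b0 * h$2 + a0 * h$3) * (b0 * p2 x0 + a0 * p1 x0),
        (deriv (deriv p2) x0 - 2 * e * \<sigma> * p2 x0) * h$1, - ((deriv (deriv p1) x0 - 2 * e * \<sigma> * p1 x0) * h$1)]
    + (- (exp (- (e * \<sigma>)) * dQ0 * h$1 / Q0^2)) *\<^sub>R vector [0, deriv p2 x0, - deriv p1 x0]"

lemma has_derivative_reeb_field:
  assumes P1: "P$1 = x0" and "sin (2 * pi * phase P) = 0" "cos (2 * pi * phase P) = \<sigma>"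
  shows "(reeb_field has_derivative dreeb \<sigma>) (at P)"
proof -
  have "\<bar>x0 - x0\<bar> < \<delta>" using \<delta>_pos by simp
  note comp = has_derivative_comp_vec_nth[where x = P and i = 1, unfolded P1]
  have Qn: "Qf p1 p2 (P$1) \<noteq> 0" using Q0_pos unfolding Q0_def P1 by simp
  show ?thesis
    unfolding reeb_field_def F_phase_def F_x_def
    apply (rule derivative_eq_intros has_derivative_F has_derivative_phase refl Qn
        comp[OF DERIV_p1] comp[OF DERIV_p2] comp[OF DERIV_deriv_p1] comp[OF DERIV_deriv_p2] comp[OF DERIV_Qf]
        \<open>\<bar>x0 - x0\<bar> < \<delta>\<close>)+
    apply (unfold F_def assms)
    apply (simp add: fun_eq_iff vec_eq_iff forall_3 dreeb_def Q0_def field_simps power2_eq_square)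
    done
qed

lemma phase_add: "phase (y + z) = phase y + phase z"
  unfolding phase_def by (simp add: algebra_simps)

lemma phase_scaleR: "phase (c *\<^sub>R y) = c * phase y"
  unfolding phase_def by (simp add: algebra_simps)

lemma reeb_field_cong: "y$1 = z$1 \<Longrightarrow> phase y = phase z \<Longrightarrow> reeb_field y = reeb_field z"
  unfolding reeb_field_def F_def F_x_def F_phase_def by simp


definition W :: real where "W = deriv p1 x0 * deriv (deriv p2) x0 - deriv (deriv p1) x0 * deriv p2 x0"

end

section \<open>Critical closed orbits\<close>

lemma min_period_unique: "min_period \<gamma> T \<Longrightarrow> min_period \<gamma> T' \<Longrightarrow> T = T'"
  unfolding min_period_def by (metis linorder_neqE_linordered_idom)

text \<open>The orbit through \<open>(x0, q1, q2)\<close> where \<open>f\<^sub>0\<close> is critical: \<open>\<sigma> = -1\<close> at its minimum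
  (\<open>\<gamma>\<^sub>h\<close>) and \<open>\<sigma> = 1\<close> at its maximum (\<open>\<gamma>\<^sub>e\<close>).\<close>

locale critical_orbit = perturbed_center +
  fixes q1 q2 \<sigma> :: real
  assumes sin_phase: "sin (2 * pi * (- b0 * q1 + a0 * q2)) = 0"
    and cos_phase: "cos (2 * pi * (- b0 * q1 + a0 * q2)) = \<sigma>"
begin

definition P0 :: "real^3" where "P0 = vector [x0, q1, q2]"
definition velocity :: "real^3" where "velocity = reeb_field P0"
definition orbit :: "real \<Rightarrow> real^3" where "orbit t = P0 + t *\<^sub>R velocity"

lemma phase_P0: "phase P0 = - b0 * q1 + a0 * q2"
  unfolding phase_def P0_def by simp

lemma deriv_p_at_x0: "deriv p2 x0 = a0 * Q0 / s" "deriv p1 x0 = - b0 * Q0 / s"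
  using a_eq b_eq s_pos Q0_pos unfolding Q0_def by (simp_all add: field_simps)

lemma velocity_eq: "velocity = (exp (- (e * \<sigma>)) / s) *\<^sub>R vector [0, a0, b0]"
  unfolding velocity_def reeb_field_def F_def F_x_def F_phase_def phase_P0[unfolded phase_def]
  using sin_phase cos_phase Q0_pos s_pos
  by (simp add: vec_eq_iff forall_3 P0_def deriv_p_at_x0 Q0_def[symmetric] phase_def)

lemma orbit_x: "orbit t $ 1 = x0"
  unfolding orbit_def P0_def velocity_eq by simp

lemma phase_orbit: "phase (orbit t) = phase P0"
  unfolding orbit_def phase_add phase_scaleR velocity_eq phase_def by (simp add: algebra_simps)

lemma orbit_in_slab: "orbit t \<in> slab"
  using orbit_x \<delta>_pos by simp

lemma reeb_orbit: "reeb \<alpha> (orbit t) = velocity"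
  unfolding reeb_eq_reeb_field[OF orbit_in_slab] velocity_def
  by (rule reeb_field_cong) (simp_all add: orbit_x phase_orbit P0_def)

lemma reeb_traj_orbit: "reeb_traj \<alpha> P0 orbit"
proof -
  have "(orbit has_vector_derivative velocity) (at t)" for t
    unfolding orbit_def[abs_def] by (auto intro!: derivative_eq_intros)
  thus ?thesis unfolding reeb_traj_def reeb_orbit by (simp add: orbit_def)
qed

lemma has_derivative_reeb_field_P0: "(reeb_field has_derivative dreeb \<sigma>) (at P0)"
  by (rule has_derivative_reeb_field) (use sin_phase cos_phase in \<open>simp_all add: P0_def phase_def\<close>)

lemma frechet_derivative_reeb_orbit: "frechet_derivative (reeb \<alpha>) (at (orbit t)) = dreeb \<sigma>"
proof -
  have "(reeb_field has_derivative dreeb \<sigma>) (at (orbit t))"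
    by (rule has_derivative_reeb_field) (use sin_phase cos_phase in \<open>simp_all add: orbit_x phase_orbit phase_P0\<close>)
  hence "(reeb \<alpha> has_derivative dreeb \<sigma>) (at (orbit t))"
    by (rule has_derivative_transform_within_open[OF _ open_slab orbit_in_slab]) (simp add: reeb_eq_reeb_field)
  thus ?thesis by (simp add: frechet_derivative_at[symmetric])
qed

text \<open>Near \<open>T\<^sub>x\<^sub>0\<close> the Reeb field only depends on \<open>x\<close> and the phase, both constant along the orbit.\<close>

lemma reeb_traj_unique:
  assumes "reeb_traj \<alpha> P0 \<gamma>"
  shows "\<gamma> = orbit"
proof
  fix t
  have "reeb \<alpha> (P0 + u *\<^sub>R velocity + z) = reeb_field (P0 + z)" if "norm z < \<delta>" for u z
  proof -
    have "\<bar>z$1\<bar> < \<delta>" using that component_le_norm_cart[of z 1] by linarith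
    hence "P0 + u *\<^sub>R velocity + z \<in> slab" by (simp add: P0_def velocity_eq)
    thus ?thesis unfolding reeb_eq_reeb_field[OF \<open>_ \<in> slab\<close>]
      by (intro reeb_field_cong) (simp_all add: P0_def velocity_eq phase_def algebra_simps)
  qed
  thus "\<gamma> t = orbit t"
    using trajectory_eq_line[OF _ _ has_derivative_reeb_field_P0 \<delta>_pos] assms
    unfolding reeb_traj_def orbit_def velocity_def by blast
qed

lemma direction_pairing: "b0 * p2 x0 + a0 * p1 x0 = s"
proof -
  define c where "c = s / Qf p1 p2 x0"
  have "a0 = c * deriv p2 x0" "b0 = - c * deriv p1 x0" unfolding a_eq b_eq c_def by simp_all
  hence "b0 * p2 x0 + a0 * p1 x0 = c * Qf p1 p2 x0" unfolding Qf_def by (simp add: algebra_simps)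
  thus ?thesis unfolding c_def using Q0_pos unfolding Q0_def by simp
qed

text \<open>The linearized Reeb flow along the orbit reduces to the planar system
  \<open>x' = - \<sigma> A \<theta>\<close>, \<open>\<theta>' = B x\<close> for the \<open>x\<close>-component and the phase.\<close>

definition lin_A :: real where "lin_A = 4 * pi^2 * e * exp (- (e * \<sigma>)) * s / Q0"
definition lin_B :: real where
  "lin_B = exp (- (e * \<sigma>)) / Q0 * ((- b0 * deriv (deriv p2) x0 - a0 * deriv (deriv p1) x0) + 2 * e * \<sigma> * s)"

definition planar_solution :: "(real \<Rightarrow> real) \<Rightarrow> (real \<Rightarrow> real) \<Rightarrow> bool" where
  "planar_solution x y \<longleftrightarrow>
     (\<forall>t. (x has_real_derivative (- \<sigma> * lin_A * y t)) (at t) \<and> (y has_real_derivative (lin_B * x t)) (at t))"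

lemma dreeb_x: "dreeb \<sigma> h $ 1 = - \<sigma> * lin_A * phase h"
  unfolding dreeb_def direction_pairing lin_A_def phase_def using Q0_pos by (simp add: field_simps)

lemma phase_dreeb: "phase (dreeb \<sigma> h) = lin_B * h$1"
proof -
  have "b0 * deriv p2 x0 + a0 * deriv p1 x0 = 0" unfolding deriv_p_at_x0 by (simp add: field_simps)
  moreover have "phase (dreeb \<sigma> h) = exp (- (e * \<sigma>)) / Q0 * ((- b0 * deriv (deriv p2) x0 - a0 * deriv (deriv p1) x0)
        + 2 * e * \<sigma> * (b0 * p2 x0 + a0 * p1 x0)) * h$1
      + exp (- (e * \<sigma>)) * dQ0 * h$1 / Q0^2 * (b0 * deriv p2 x0 + a0 * deriv p1 x0)"
    unfolding dreeb_def phase_def using Q0_pos by (simp add: field_simps)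
  ultimately show ?thesis unfolding direction_pairing lin_B_def by simp
qed

lemma lambda0_dreeb: "p1 x0 * dreeb \<sigma> h $ 2 + p2 x0 * dreeb \<sigma> h $ 3 = 0"
proof -
  have Q0_eq: "Q0 = p1 x0 * deriv p2 x0 - p2 x0 * deriv p1 x0" unfolding Q0_def Qf_def by simp
  have "p1 x0 * dreeb \<sigma> h $ 2 + p2 x0 * dreeb \<sigma> h $ 3 = exp (- (e * \<sigma>)) / Q0 * dQ0 * h$1
      - exp (- (e * \<sigma>)) * dQ0 * h$1 / Q0^2 * (p1 x0 * deriv p2 x0 - p2 x0 * deriv p1 x0)"
    unfolding dreeb_def dQ0_def using Q0_pos by (simp add: field_simps)
  thus ?thesis unfolding Q0_eq[symmetric] using Q0_pos by (simp add: power2_eq_square)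
qed

definition xi_vector :: "real \<Rightarrow> real \<Rightarrow> real^3" where
  "xi_vector x \<theta> = vector [x, - p2 x0 * \<theta> / s, p1 x0 * \<theta> / s]"

lemma phase_xi_vector: "phase (xi_vector x \<theta>) = \<theta>"
proof -
  have "phase (xi_vector x \<theta>) = (b0 * p2 x0 + a0 * p1 x0) * \<theta> / s"
    unfolding phase_def xi_vector_def using s_pos by (simp add: field_simps)
  thus ?thesis using s_pos by (simp add: direction_pairing)
qed

lemma xi_vector_eq:
  assumes "p1 x0 * Y$2 + p2 x0 * Y$3 = 0"
  shows "Y = xi_vector (Y$1) (phase Y)"
proof -
  have "s * Y$2 + p2 x0 * phase Y = a0 * (p1 x0 * Y$2 + p2 x0 * Y$3)"
    "s * Y$3 - p1 x0 * phase Y = b0 * (p1 x0 * Y$2 + p2 x0 * Y$3)"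
    unfolding direction_pairing[symmetric] phase_def by (simp_all add: algebra_simps)
  hence "s * Y$2 = - p2 x0 * phase Y" "s * Y$3 = p1 x0 * phase Y"
    unfolding assms by simp_all
  thus ?thesis using s_pos unfolding xi_vector_def by (simp add: vec_eq_iff forall_3 field_simps)
qed

lemma xi_vector_scaleR_add:
  "c *\<^sub>R xi_vector x \<theta> + d *\<^sub>R xi_vector x' \<theta>' = xi_vector (c * x + d * x') (c * \<theta> + d * \<theta>')"
  unfolding xi_vector_def using s_pos by (simp add: vec_eq_iff forall_3 field_simps)

lemma V1_eq_xi_vector: "V1 P = xi_vector 1 0"
  unfolding V1_def xi_vector_def by simp

lemma V2_orbit_eq_xi_vector: "V2 p1 p2 (orbit t) = xi_vector 0 (s / Q0)"
  unfolding V2_def xi_vector_def orbit_x Q0_def[symmetric] using s_pos by (simp add: vec_eq_iff forall_3)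

lemma lin_sol_planar:
  assumes "lin_sol \<alpha> orbit v Y"
  shows "planar_solution (\<lambda>t. Y t $ 1) (\<lambda>t. phase (Y t))"
    and "p1 x0 * Y t $ 2 + p2 x0 * Y t $ 3 = p1 x0 * v $ 2 + p2 x0 * v $ 3"
proof -
  have Y0: "Y 0 = v" and dY: "\<And>t. (Y has_vector_derivative dreeb \<sigma> (Y t)) (at t)"
    using assms unfolding lin_sol_def frechet_derivative_reeb_orbit by auto
  have "((\<lambda>t. phase (Y t)) has_real_derivative phase (dreeb \<sigma> (Y t))) (at t)" for t
    unfolding phase_def by (rule derivative_eq_intros has_vector_derivative_vec_nth[OF dY] refl)+ simp
  moreover have "((\<lambda>t. Y t $ 1) has_real_derivative dreeb \<sigma> (Y t) $ 1) (at t)" for t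
    using has_vector_derivative_vec_nth[OF dY] .
  ultimately show "planar_solution (\<lambda>t. Y t $ 1) (\<lambda>t. phase (Y t))"
    unfolding planar_solution_def phase_dreeb dreeb_x by simp
  have "((\<lambda>t. p1 x0 * Y t $ 2 + p2 x0 * Y t $ 3) has_real_derivative
      p1 x0 * dreeb \<sigma> (Y u) $ 2 + p2 x0 * dreeb \<sigma> (Y u) $ 3) (at u)" for u
    by (rule derivative_eq_intros has_vector_derivative_vec_nth[OF dY] refl)+ simp
  thus "p1 x0 * Y t $ 2 + p2 x0 * Y t $ 3 = p1 x0 * v $ 2 + p2 x0 * v $ 3"
    using DERIV_isconst_all[of "\<lambda>t. p1 x0 * Y t $ 2 + p2 x0 * Y t $ 3" t 0] unfolding lambda0_dreeb Y0 by blast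
qed

lemma lin_sol_xi_vector:
  assumes "planar_solution x y"
  shows "lin_sol \<alpha> orbit (xi_vector (x 0) (y 0)) (\<lambda>t. xi_vector (x t) (y t))"
  unfolding lin_sol_def frechet_derivative_reeb_orbit
proof (intro conjI allI refl)
  fix t
  have "dreeb \<sigma> (xi_vector (x t) (y t)) = xi_vector (- \<sigma> * lin_A * y t) (lin_B * x t)"
    by (subst xi_vector_eq[OF lambda0_dreeb]) (simp add: dreeb_x phase_dreeb phase_xi_vector, simp add: xi_vector_def)
  moreover have "((\<lambda>t. xi_vector (x t) (y t)) has_vector_derivative xi_vector (- \<sigma> * lin_A * y t) (lin_B * x t)) (at t)"
    using assms s_pos unfolding xi_vector_def planar_solution_def has_vector_derivative_def has_field_derivative_def
    by (auto intro!: derivative_eq_intros simp: fun_eq_iff vec_eq_iff forall_3 algebra_simps)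
  ultimately show "((\<lambda>t. xi_vector (x t) (y t)) has_vector_derivative
      dreeb \<sigma> (xi_vector (x t) (y t))) (at t)" by simp
qed

lemma lin_sol_eq_xi_vector:
  assumes "lin_sol \<alpha> orbit (xi_vector (x 0) (y 0)) Y" "planar_solution x y"
  shows "Y t = xi_vector (x t) (y t)"
proof -
  have "p1 x0 * Y t $ 2 + p2 x0 * Y t $ 3 = 0"
    using lin_sol_planar(2)[OF assms(1)] by (simp add: xi_vector_def algebra_simps)
  moreover have "Y 0 $ 1 = x 0" "phase (Y 0) = y 0"
    using assms(1) unfolding lin_sol_def by (simp_all add: phase_xi_vector, simp add: xi_vector_def)
  hence "Y t $ 1 = x t \<and> phase (Y t) = y t"
    using lin_sol_planar(1)[OF assms(1)] assms(2) unfolding planar_solution_def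
    by (intro linear_planar_ode_unique[where ca = "- \<sigma> * lin_A" and cb = lin_B]) simp_all
  ultimately show ?thesis using xi_vector_eq by metis
qed

lemma lin_matrix_orbit_iff:
  "lin_matrix V1 (V2 p1 p2) orbit Y1 Y2 \<Psi> \<longleftrightarrow>
     (\<forall>t. Y1 t = xi_vector (\<Psi> t $1$1) (s / Q0 * \<Psi> t $2$1) \<and> Y2 t = xi_vector (\<Psi> t $1$2) (s / Q0 * \<Psi> t $2$2))"
  unfolding lin_matrix_def V1_eq_xi_vector V2_orbit_eq_xi_vector xi_vector_scaleR_add by (simp add: ac_simps)

lemma xi_vector_inject: "xi_vector x \<theta> = xi_vector x' \<theta>' \<longleftrightarrow> x = x' \<and> \<theta> = \<theta>'"
  by (metis phase_xi_vector vector_3(1) xi_vector_def)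

definition period :: real where "period = s * exp (e * \<sigma>)"

lemma period_pos: "period > 0"
  unfolding period_def using s_pos by simp

lemma min_period_orbit: "min_period orbit period"
  unfolding min_period_def
proof (intro conjI allI impI period_pos notI)
  have closes_iff: "closes_at orbit \<tau> \<longleftrightarrow> (\<tau> / period) * a0 \<in> \<int> \<and> (\<tau> / period) * b0 \<in> \<int>" for \<tau>
    unfolding closes_at_def orbit_def velocity_eq period_def by (simp add: exp_minus field_simps)
  show "closes_at orbit period" unfolding closes_iff using period_pos by simp
  fix \<tau> assume "0 < \<tau> \<and> \<tau> < period" "closes_at orbit \<tau>"
  hence "\<tau> / period \<in> \<int>" "0 < \<tau> / period" "\<tau> / period < 1"
    using Ints_if_coprime_multiples[OF coprime_ab] period_pos unfolding closes_iff by simp_all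
  then obtain n :: int where "0 < n" "n < 1" by (metis Ints_cases of_int_0_less_iff of_int_less_1_iff)
  thus False by simp
qed

lemma CZ_orbit_is_of_planar:
  assumes sol1: "planar_solution x1 y1" "x1 0 = 1" "y1 0 = 0"
    and sol2: "planar_solution x2 y2" "x2 0 = 0" "y2 0 = s / Q0"
    and CZ: "CZ_path (\<lambda>t. vector [vector [x1 t, x2 t], vector [Q0 / s * y1 t, Q0 / s * y2 t]]) period = k"
  shows "CZ_orbit_is \<alpha> V1 (V2 p1 p2) P0 k"
proof -
  have "orbit 0 = P0" by (simp add: orbit_def)
  hence V: "V1 P0 = xi_vector (x1 0) (y1 0)" "V2 p1 p2 P0 = xi_vector (x2 0) (y2 0)"
    using V1_eq_xi_vector V2_orbit_eq_xi_vector[of 0] sol1(2,3) sol2(2,3) by simp_all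
  have lin_matrix_iff: "lin_matrix V1 (V2 p1 p2) orbit (\<lambda>t. xi_vector (x1 t) (y1 t)) (\<lambda>t. xi_vector (x2 t) (y2 t)) \<Psi>
      \<longleftrightarrow> \<Psi> = (\<lambda>t. vector [vector [x1 t, x2 t], vector [Q0 / s * y1 t, Q0 / s * y2 t]])" for \<Psi>
    unfolding lin_matrix_orbit_iff xi_vector_inject using s_pos Q0_pos
    by (auto simp: fun_eq_iff vec_eq_iff forall_2 field_simps)
  show ?thesis unfolding CZ_orbit_is_def
  proof (intro conjI)
    have "reeb_traj \<alpha> P0 orbit \<and> min_period orbit period \<and>
        lin_sol \<alpha> orbit (V1 P0) (\<lambda>t. xi_vector (x1 t) (y1 t)) \<and>
        lin_sol \<alpha> orbit (V2 p1 p2 P0) (\<lambda>t. xi_vector (x2 t) (y2 t)) \<and>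
        lin_matrix V1 (V2 p1 p2) orbit (\<lambda>t. xi_vector (x1 t) (y1 t)) (\<lambda>t. xi_vector (x2 t) (y2 t))
          (\<lambda>t. vector [vector [x1 t, x2 t], vector [Q0 / s * y1 t, Q0 / s * y2 t]])"
      unfolding V lin_matrix_iff
      using reeb_traj_orbit min_period_orbit lin_sol_xi_vector sol1(1) sol2(1) by blast
    thus "\<exists>\<gamma> T Y1 Y2 \<Psi>. reeb_traj \<alpha> P0 \<gamma> \<and> min_period \<gamma> T \<and> lin_sol \<alpha> \<gamma> (V1 P0) Y1 \<and>
      lin_sol \<alpha> \<gamma> (V2 p1 p2 P0) Y2 \<and> lin_matrix V1 (V2 p1 p2) \<gamma> Y1 Y2 \<Psi>" by blast
  next
    show "\<forall>\<gamma> T Y1 Y2 \<Psi>. reeb_traj \<alpha> P0 \<gamma> \<and> min_period \<gamma> T \<and> lin_sol \<alpha> \<gamma> (V1 P0) Y1 \<and>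
      lin_sol \<alpha> \<gamma> (V2 p1 p2 P0) Y2 \<and> lin_matrix V1 (V2 p1 p2) \<gamma> Y1 Y2 \<Psi> \<longrightarrow> CZ_path \<Psi> T = k"
    proof (intro allI impI)
    fix \<gamma> T Y1 Y2 \<Psi>
    assume "reeb_traj \<alpha> P0 \<gamma> \<and> min_period \<gamma> T \<and> lin_sol \<alpha> \<gamma> (V1 P0) Y1 \<and>
      lin_sol \<alpha> \<gamma> (V2 p1 p2 P0) Y2 \<and> lin_matrix V1 (V2 p1 p2) \<gamma> Y1 Y2 \<Psi>"
    moreover from this have "\<gamma> = orbit" by (blast intro: reeb_traj_unique)
    ultimately have "T = period" "Y1 = (\<lambda>t. xi_vector (x1 t) (y1 t))" "Y2 = (\<lambda>t. xi_vector (x2 t) (y2 t))"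
      "lin_matrix V1 (V2 p1 p2) orbit Y1 Y2 \<Psi>"
      using min_period_unique[OF _ min_period_orbit] lin_sol_eq_xi_vector[OF _ sol1(1)]
        lin_sol_eq_xi_vector[OF _ sol2(1)] unfolding V by (auto simp: fun_eq_iff)
    thus "CZ_path \<Psi> T = k" using CZ lin_matrix_iff by simp
    qed
  qed
qed

lemma planar_solution_elliptic:
  assumes "\<sigma> = 1" "lin_A > 0" "\<omega> > 0" "\<omega> * \<omega> = lin_A * lin_B"
  shows "planar_solution (\<lambda>t. x * cos (\<omega> * t) - lin_A / \<omega> * y * sin (\<omega> * t)) (\<lambda>t. y * cos (\<omega> * t) + \<omega> / lin_A * x * sin (\<omega> * t))"
  unfolding planar_solution_def
proof
  fix t
  have "((\<lambda>t. x * cos (\<omega> * t) - lin_A / \<omega> * y * sin (\<omega> * t)) has_real_derivative - x * \<omega> * sin (\<omega> * t) - lin_A * y * cos (\<omega> * t)) (at t)"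
    "((\<lambda>t. y * cos (\<omega> * t) + \<omega> / lin_A * x * sin (\<omega> * t)) has_real_derivative - y * \<omega> * sin (\<omega> * t) + \<omega> / lin_A * x * \<omega> * cos (\<omega> * t)) (at t)"
    using assms(2,3) by (auto intro!: derivative_eq_intros simp: field_simps)
  moreover have "- x * \<omega> * sin (\<omega> * t) - lin_A * y * cos (\<omega> * t) = - \<sigma> * lin_A * (y * cos (\<omega> * t) + \<omega> / lin_A * x * sin (\<omega> * t))"
    using assms(1-3) by (simp add: field_simps)
  moreover have "- y * \<omega> * sin (\<omega> * t) + \<omega> / lin_A * x * \<omega> * cos (\<omega> * t) = lin_B * (x * cos (\<omega> * t) - lin_A / \<omega> * y * sin (\<omega> * t))"
    using assms(2-4) by (simp add: field_simps flip: assms(4))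
  ultimately show "((\<lambda>t. x * cos (\<omega> * t) - lin_A / \<omega> * y * sin (\<omega> * t)) has_real_derivative - \<sigma> * lin_A * (y * cos (\<omega> * t) + \<omega> / lin_A * x * sin (\<omega> * t))) (at t) \<and>
    ((\<lambda>t. y * cos (\<omega> * t) + \<omega> / lin_A * x * sin (\<omega> * t)) has_real_derivative lin_B * (x * cos (\<omega> * t) - lin_A / \<omega> * y * sin (\<omega> * t))) (at t)" by simp
qed

lemma planar_solution_hyperbolic:
  assumes "\<sigma> = -1" "lin_A > 0" "\<omega> > 0" "\<omega> * \<omega> = lin_A * lin_B"
  shows "planar_solution (\<lambda>t. x * cosh (\<omega> * t) + lin_A / \<omega> * y * sinh (\<omega> * t)) (\<lambda>t. y * cosh (\<omega> * t) + \<omega> / lin_A * x * sinh (\<omega> * t))"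
  unfolding planar_solution_def
proof
  fix t
  have "((\<lambda>t. x * cosh (\<omega> * t) + lin_A / \<omega> * y * sinh (\<omega> * t)) has_real_derivative x * \<omega> * sinh (\<omega> * t) + lin_A * y * cosh (\<omega> * t)) (at t)"
    "((\<lambda>t. y * cosh (\<omega> * t) + \<omega> / lin_A * x * sinh (\<omega> * t)) has_real_derivative y * \<omega> * sinh (\<omega> * t) + \<omega> / lin_A * x * \<omega> * cosh (\<omega> * t)) (at t)"
    using assms(2,3) by (auto intro!: derivative_eq_intros simp: field_simps)
  moreover have "x * \<omega> * sinh (\<omega> * t) + lin_A * y * cosh (\<omega> * t) = - \<sigma> * lin_A * (y * cosh (\<omega> * t) + \<omega> / lin_A * x * sinh (\<omega> * t))"
    using assms(1-3) by (simp add: field_simps)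
  moreover have "y * \<omega> * sinh (\<omega> * t) + \<omega> / lin_A * x * \<omega> * cosh (\<omega> * t) = lin_B * (x * cosh (\<omega> * t) + lin_A / \<omega> * y * sinh (\<omega> * t))"
    using assms(2-4) by (simp add: field_simps flip: assms(4))
  ultimately show "((\<lambda>t. x * cosh (\<omega> * t) + lin_A / \<omega> * y * sinh (\<omega> * t)) has_real_derivative - \<sigma> * lin_A * (y * cosh (\<omega> * t) + \<omega> / lin_A * x * sinh (\<omega> * t))) (at t) \<and>
    ((\<lambda>t. y * cosh (\<omega> * t) + \<omega> / lin_A * x * sinh (\<omega> * t)) has_real_derivative lin_B * (x * cosh (\<omega> * t) + lin_A / \<omega> * y * sinh (\<omega> * t))) (at t)" by simp
qed

lemma CZ_orbit_elliptic:
  assumes "\<sigma> = 1" "lin_A > 0" "lin_B > 0" "sqrt (lin_A * lin_B) * period < 2 * pi"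
  shows "CZ_orbit_is \<alpha> V1 (V2 p1 p2) P0 1"
proof -
  define \<omega> where "\<omega> = sqrt (lin_A * lin_B)"
  have \<omega>: "\<omega> > 0" "\<omega> * \<omega> = lin_A * lin_B" unfolding \<omega>_def using assms(2,3) by simp_all
  define k where "k = Q0 * \<omega> / (s * lin_A)"
  have k: "k > 0" unfolding k_def using Q0_pos assms(2) s_pos \<omega> by simp
  note sol = planar_solution_elliptic[OF assms(1,2) \<omega>]
  have "(\<lambda>t. vector [vector [cos (\<omega> * t) - lin_A / \<omega> * 0 * sin (\<omega> * t),
        0 * cos (\<omega> * t) - lin_A / \<omega> * (s / Q0) * sin (\<omega> * t)],
      vector [Q0 / s * (0 * cos (\<omega> * t) + \<omega> / lin_A * 1 * sin (\<omega> * t)),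
        Q0 / s * (s / Q0 * cos (\<omega> * t) + \<omega> / lin_A * 0 * sin (\<omega> * t))]]) = elliptic_path k \<omega>"
    unfolding elliptic_path_def k_def using s_pos Q0_pos \<omega> assms(2) by (simp add: fun_eq_iff field_simps)
  thus ?thesis
    using CZ_orbit_is_of_planar[OF sol[of 1 0] _ _ sol[of 0 "s / Q0"]] CZ_path_elliptic_path[OF k \<omega>(1) period_pos]
      assms(4) unfolding \<omega>_def by simp
qed

lemma CZ_orbit_hyperbolic:
  assumes "\<sigma> = -1" "lin_A > 0" "lin_B > 0"
  shows "CZ_orbit_is \<alpha> V1 (V2 p1 p2) P0 0"
proof -
  define \<omega> where "\<omega> = sqrt (lin_A * lin_B)"
  have \<omega>: "\<omega> > 0" "\<omega> * \<omega> = lin_A * lin_B" unfolding \<omega>_def using assms(2,3) by simp_all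
  define k where "k = Q0 * \<omega> / (s * lin_A)"
  have k: "k > 0" unfolding k_def using Q0_pos assms(2) s_pos \<omega> by simp
  note sol = planar_solution_hyperbolic[OF assms(1,2) \<omega>]
  have "(\<lambda>t. vector [vector [cosh (\<omega> * t) + lin_A / \<omega> * 0 * sinh (\<omega> * t),
        0 * cosh (\<omega> * t) + lin_A / \<omega> * (s / Q0) * sinh (\<omega> * t)],
      vector [Q0 / s * (0 * cosh (\<omega> * t) + \<omega> / lin_A * 1 * sinh (\<omega> * t)),
        Q0 / s * (s / Q0 * cosh (\<omega> * t) + \<omega> / lin_A * 0 * sinh (\<omega> * t))]]) = hyperbolic_path k \<omega>"
    unfolding hyperbolic_path_def k_def using s_pos Q0_pos \<omega> assms(2) by (simp add: fun_eq_iff field_simps)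
  thus ?thesis
    using CZ_orbit_is_of_planar[OF sol[of 1 0] _ _ sol[of 0 "s / Q0"]]
      CZ_path_hyperbolic_path[OF k less_imp_le[OF period_pos]] by simp
qed

lemma lin_B_eq: "lin_B = exp (- (e * \<sigma>)) / Q0 * (s * W / Q0 + 2 * e * \<sigma> * s)"
proof -
  have "- b0 * deriv (deriv p2) x0 - a0 * deriv (deriv p1) x0 = s * W / Q0"
    using Q0_pos unfolding a_eq b_eq W_def Q0_def by (simp add: field_simps)
  thus ?thesis unfolding lin_B_def by simp
qed

lemma CZ_orbit_hyperbolic_small:
  assumes "\<sigma> = -1" "e > 0" "2 * e * Q0 < W"
  shows "CZ_orbit_is \<alpha> V1 (V2 p1 p2) P0 0"
proof (rule CZ_orbit_hyperbolic[OF assms(1)])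
  show "lin_A > 0" unfolding lin_A_def using assms(2) s_pos Q0_pos by simp
  have "s * (2 * e * Q0) < s * W" using assms(3) s_pos by simp
  hence "s * W / Q0 + 2 * e * \<sigma> * s > 0" using assms(1) Q0_pos by (simp add: field_simps)
  thus "lin_B > 0" unfolding lin_B_eq using Q0_pos by simp
qed

lemma CZ_orbit_elliptic_small:
  assumes "\<sigma> = 1" "0 < e" "e \<le> 1" "W > 0" "e * s^3 * (s * W / Q0 + 2 * s) < Q0^2"
  shows "CZ_orbit_is \<alpha> V1 (V2 p1 p2) P0 1"
proof (rule CZ_orbit_elliptic[OF assms(1)])
  show A: "lin_A > 0" unfolding lin_A_def using assms(2) s_pos Q0_pos by simp
  have "s * W / Q0 > 0" using s_pos assms(4) Q0_pos by simp
  thus B: "lin_B > 0" unfolding lin_B_eq using Q0_pos assms(1,2) s_pos by (simp add: add_pos_pos)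
  \<comment> \<open>\<open>\<omega> T = 2 \<pi> \<surd>(e s\<^sup>3 (s W / Q0 + 2 e s)) / Q0\<close>, which is small for small \<open>e\<close>.\<close>
  have "lin_A * lin_B * period^2 = 4 * pi^2 * (e * s^3 * (s * W / Q0 + 2 * e * \<sigma> * s) / Q0^2)"
    unfolding lin_A_def lin_B_eq period_def using Q0_pos
    by (simp add: field_simps power2_eq_square power3_eq_cube exp_minus mult_exp_exp)
  also have "\<dots> = 4 * pi^2 * (e * s^3 * (s * W / Q0 + 2 * e * s) / Q0^2)" using assms(1) by simp
  also have "\<dots> < 4 * pi^2"
  proof -
    have "e * s^3 * (s * W / Q0 + 2 * e * s) \<le> e * s^3 * (s * W / Q0 + 2 * s)"
      using assms(2,3) s_pos by (intro mult_left_mono) auto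
    thus ?thesis using assms(5) Q0_pos by (simp add: divide_less_eq)
  qed
  finally have "sqrt (lin_A * lin_B * period^2) < sqrt ((2 * pi)^2)" by (simp add: power_mult_distrib)
  thus "sqrt (lin_A * lin_B) * period < 2 * pi" using period_pos by (simp add: real_sqrt_mult)
qed

end

context perturbed_center
begin

lemma CZ_critical_orbits:
  assumes "0 < e" "e \<le> 1" "2 * e * Q0 < W" "e * s^3 * (s * W / Q0 + 2 * s) < Q0^2"
  shows "(- b0 * q1 + a0 * q2 + 1/2 \<in> \<int> \<longrightarrow> CZ_orbit_is \<alpha> V1 (V2 p1 p2) (vector [x0, q1, q2]) 0) \<and>
    (- b0 * q1 + a0 * q2 \<in> \<int> \<longrightarrow> CZ_orbit_is \<alpha> V1 (V2 p1 p2) (vector [x0, q1, q2]) 1)"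
proof -
  have "W > 0" using assms(1,3) Q0_pos by (smt (verit) mult_pos_pos)
  show ?thesis
  proof (intro conjI impI)
    assume "- b0 * q1 + a0 * q2 + 1/2 \<in> \<int>"
    then obtain n :: int where "- b0 * q1 + a0 * q2 + 1/2 = n" by (metis Ints_cases)
    hence "2 * pi * (- b0 * q1 + a0 * q2) = 2 * pi * (n - 1/2)" by (intro arg_cong[where f = "(*) (2 * pi)"]) linarith
    hence "2 * pi * (- b0 * q1 + a0 * q2) = 2 * pi * n - pi" by (simp add: right_diff_distrib)
    hence "sin (2 * pi * (- b0 * q1 + a0 * q2)) = 0" "cos (2 * pi * (- b0 * q1 + a0 * q2)) = -1"
      by (simp_all add: sin_diff cos_diff)
    then interpret hyperbolic: critical_orbit p1 p2 x0 \<delta> s e a b \<alpha> q1 q2 "-1" by unfold_locales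
    show "CZ_orbit_is \<alpha> V1 (V2 p1 p2) (vector [x0, q1, q2]) 0"
      using hyperbolic.CZ_orbit_hyperbolic_small assms(1,3) unfolding hyperbolic.P0_def by simp
  next
    assume "- b0 * q1 + a0 * q2 \<in> \<int>"
    then obtain n :: int where "- b0 * q1 + a0 * q2 = n" by (metis Ints_cases)
    hence "sin (2 * pi * (- b0 * q1 + a0 * q2)) = 0" "cos (2 * pi * (- b0 * q1 + a0 * q2)) = 1" by simp_all
    then interpret elliptic: critical_orbit p1 p2 x0 \<delta> s e a b \<alpha> q1 q2 1 by unfold_locales
    show "CZ_orbit_is \<alpha> V1 (V2 p1 p2) (vector [x0, q1, q2]) 1"
      using elliptic.CZ_orbit_elliptic_small assms \<open>W > 0\<close> unfolding elliptic.P0_def by simp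
  qed
qed

end

section \<open>Reduction to the local model\<close>

lemma CZ_critical_orbits_small_eps:
  assumes center: "\<And>\<epsilon>. perturbed_center p1 p2 x0 \<delta> s \<epsilon> a b (\<alpha> \<epsilon>)"
    and W: "deriv p1 x0 * deriv (deriv p2) x0 - deriv (deriv p1) x0 * deriv p2 x0 > 0"
  shows "\<exists>\<epsilon>0>0. \<forall>\<epsilon>. 0 < \<epsilon> \<and> \<epsilon> < \<epsilon>0 \<longrightarrow> (\<forall>q1 q2.
    (- real_of_int b * q1 + real_of_int a * q2 + 1/2 \<in> \<int> \<longrightarrow> CZ_orbit_is (\<alpha> \<epsilon>) V1 (V2 p1 p2) (vector [x0, q1, q2]) 0) \<and>
    (- real_of_int b * q1 + real_of_int a * q2 \<in> \<int> \<longrightarrow> CZ_orbit_is (\<alpha> \<epsilon>) V1 (V2 p1 p2) (vector [x0, q1, q2]) 1))"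
proof -
  define Q0 W where "Q0 = Qf p1 p2 x0"
    and "W = deriv p1 x0 * deriv (deriv p2) x0 - deriv (deriv p1) x0 * deriv p2 x0"
  have pos: "Q0 > 0" "W > 0" "s > 0"
    using perturbed_center.Q0_pos[OF center] perturbed_center.s_pos[OF center] W
    unfolding Q0_def W_def perturbed_center.Q0_def[OF center] by simp_all
  define \<epsilon>0 where "\<epsilon>0 = min 1 (min (W / (2 * Q0)) (Q0^2 / (s^3 * (s * W / Q0 + 2 * s))))"
  have "\<epsilon>0 > 0" unfolding \<epsilon>0_def using pos by (simp add: add_pos_pos)
  moreover have "0 < \<epsilon> \<and> \<epsilon> \<le> 1 \<and> 2 * \<epsilon> * Q0 < W \<and> \<epsilon> * s^3 * (s * W / Q0 + 2 * s) < Q0^2"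
    if "0 < \<epsilon>" "\<epsilon> < \<epsilon>0" for \<epsilon>
    using that pos unfolding \<epsilon>0_def
    by (auto simp: less_divide_eq add_pos_pos mult.commute mult.left_commute)
  ultimately show ?thesis
    using perturbed_center.CZ_critical_orbits[OF center]
    unfolding perturbed_center.Q0_def[OF center] perturbed_center.W_def[OF center] Q0_def W_def by blast
qed

lemma smooth_on_DERIV:
  assumes "smooth_on f I" "x \<in> I"
  shows "DERIV f x :> deriv f x" "DERIV (deriv f) x :> deriv (deriv f) x"
proof -
  have "((deriv ^^ 0) f) field_differentiable (at x)" "((deriv ^^ 1) f) field_differentiable (at x)"
    using assms unfolding smooth_on_def by blast+
  thus "DERIV f x :> deriv f x" "DERIV (deriv f) x :> deriv (deriv f) x"
    by (simp_all add: DERIV_deriv_iff_field_differentiable)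
qed

lemma prim_dir_center:
  assumes "toric_contact p1 p2 I" "x0 \<in> centers p1 p2 I L"
  shows "primitive_direction (toric_reeb p1 p2 x0) (prim_dir p1 p2 x0)"
proof -
  obtain T where "0 < T" "T * fst (toric_reeb p1 p2 x0) \<in> \<int>" "T * snd (toric_reeb p1 p2 x0) \<in> \<int>"
    and "x0 \<in> I" using assms(2) unfolding centers_def by blast
  moreover have "Qf p1 p2 x0 > 0" using assms(1) \<open>x0 \<in> I\<close> unfolding toric_contact_def by blast
  hence "toric_reeb p1 p2 x0 \<noteq> (0, 0)" unfolding toric_reeb_def Qf_def by auto
  ultimately show ?thesis unfolding prim_dir_eq_THE by (intro primitive_direction_THE)
qed

lemma zero_near_point_outside_closure_support:
  fixes f :: "real \<Rightarrow> real"
  assumes "x0 \<notin> closure {x. f x \<noteq> 0}"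
  shows "\<exists>d>0. \<forall>y. \<bar>y - x0\<bar> < d \<longrightarrow> f y = 0"
proof -
  obtain d where "d > 0" "\<And>y. dist y x0 < d \<Longrightarrow> y \<in> - closure {x. f x \<noteq> 0}"
    using assms open_dist[of "- closure {x. f x \<noteq> 0}"] by blast
  thus ?thesis using closure_subset[of "{x. f x \<noteq> 0}"] by (force simp: dist_real_def)
qed

lemma pert_F_near_center:
  assumes fin: "finite C" and center: "x0 \<in> C"
    and shape: "\<exists>\<delta>>0. \<forall>x. \<bar>x - x0\<bar> < \<delta> \<longrightarrow> \<beta> x0 x = 1 - (x - x0)^2"
    and disj: "\<forall>c\<in>C. c \<noteq> x0 \<longrightarrow> closure {x. \<beta> c x \<noteq> 0} \<inter> closure {x. \<beta> x0 x \<noteq> 0} = {}"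
  shows "\<exists>\<delta>>0. \<forall>P. \<bar>P$1 - x0\<bar> < \<delta> \<longrightarrow> pert_F p1 p2 C \<beta> P =
    (1 - (P$1 - x0)^2) * cos (2 * pi * (- real_of_int (snd (prim_dir p1 p2 x0)) * P$2
                                        + real_of_int (fst (prim_dir p1 p2 x0)) * P$3))"
proof -
  obtain \<delta>0 where \<delta>0: "\<delta>0 > 0" "\<And>x. \<bar>x - x0\<bar> < \<delta>0 \<Longrightarrow> \<beta> x0 x = 1 - (x - x0)^2"
    using shape by blast
  have "x0 \<in> {x. \<beta> x0 x \<noteq> 0}" using \<delta>0 by simp
  hence "x0 \<in> closure {x. \<beta> x0 x \<noteq> 0}" by (rule subsetD[OF closure_subset])
  hence "x0 \<notin> closure {x. \<beta> c x \<noteq> 0}" if "c \<in> C - {x0}" for c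
    using disj that by blast
  hence "\<exists>d>0. \<forall>y. \<bar>y - x0\<bar> < d \<longrightarrow> \<beta> c y = 0" if "c \<in> C - {x0}" for c
    using that by (blast intro: zero_near_point_outside_closure_support)
  then obtain d where d: "\<And>c. c \<in> C - {x0} \<Longrightarrow> d c > 0 \<and> (\<forall>y. \<bar>y - x0\<bar> < d c \<longrightarrow> \<beta> c y = 0)"
    by metis
  define \<delta> where "\<delta> = Min (insert \<delta>0 (d ` (C - {x0})))"
  have "\<delta> > 0" "\<delta> \<le> \<delta>0" "\<And>c. c \<in> C - {x0} \<Longrightarrow> \<delta> \<le> d c"
    unfolding \<delta>_def using fin \<delta>0(1) d by auto
  moreover have "pert_F p1 p2 C \<beta> P = \<beta> x0 (P$1) * cos (2 * pi * (- real_of_int (snd (prim_dir p1 p2 x0)) * P$2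
      + real_of_int (fst (prim_dir p1 p2 x0)) * P$3))" if "\<bar>P$1 - x0\<bar> < \<delta>" for P
    unfolding pert_F_def sum.remove[OF fin center]
    using that d \<open>\<And>c. c \<in> C - {x0} \<Longrightarrow> \<delta> \<le> d c\<close> by (force intro!: sum.neutral)
  ultimately show ?thesis using \<delta>0(2) by force
qed

lemma perturbed_center_at_center:
  assumes contact: "toric_contact p1 p2 I" and fin: "finite (centers p1 p2 I L)"
    and shape: "\<forall>c\<in>centers p1 p2 I L. \<exists>\<delta>>0. \<forall>x. \<bar>x - c\<bar> < \<delta> \<longrightarrow> \<beta> c x = 1 - (x - c)^2"
    and disj: "\<forall>c\<in>centers p1 p2 I L. \<forall>c'\<in>centers p1 p2 I L. c \<noteq> c' \<longrightarrow>
                 closure {x. \<beta> c x \<noteq> 0} \<inter> closure {x. \<beta> c' x \<noteq> 0} = {}"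
    and center: "x0 \<in> centers p1 p2 I L"
  obtains \<delta> s where "\<And>\<epsilon>. perturbed_center p1 p2 x0 \<delta> s \<epsilon> (fst (prim_dir p1 p2 x0)) (snd (prim_dir p1 p2 x0))
    (pert_form p1 p2 (centers p1 p2 I L) \<beta> \<epsilon>)"
proof -
  obtain l r where I: "I = {l<..<r}" and smooth: "smooth_on p1 I" "smooth_on p2 I"
    and Q: "\<forall>x\<in>I. Qf p1 p2 x > 0"
    using contact unfolding toric_contact_def by blast
  have x0: "x0 \<in> I" using center unfolding centers_def by blast
  obtain s where s: "s > 0" "coprime (fst (prim_dir p1 p2 x0)) (snd (prim_dir p1 p2 x0))"
    "real_of_int (fst (prim_dir p1 p2 x0)) = s * (deriv p2 x0 / Qf p1 p2 x0)"
    "real_of_int (snd (prim_dir p1 p2 x0)) = s * (- deriv p1 x0 / Qf p1 p2 x0)"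
    using prim_dir_center[OF contact center] unfolding primitive_direction_def toric_reeb_def by auto
  have "\<exists>\<delta>>0. \<forall>x. \<bar>x - x0\<bar> < \<delta> \<longrightarrow> \<beta> x0 x = 1 - (x - x0)^2"
    "\<forall>c\<in>centers p1 p2 I L. c \<noteq> x0 \<longrightarrow> closure {x. \<beta> c x \<noteq> 0} \<inter> closure {x. \<beta> x0 x \<noteq> 0} = {}"
    using shape disj center by blast+
  then obtain \<delta>1 where \<delta>1: "\<delta>1 > 0" "\<forall>P. \<bar>P$1 - x0\<bar> < \<delta>1 \<longrightarrow> pert_F p1 p2 (centers p1 p2 I L) \<beta> P =
      (1 - (P$1 - x0)^2) * cos (2 * pi * (- real_of_int (snd (prim_dir p1 p2 x0)) * P$2
                                          + real_of_int (fst (prim_dir p1 p2 x0)) * P$3))"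
    using pert_F_near_center[OF fin center] by blast
  define \<delta> where "\<delta> = min \<delta>1 (min (x0 - l) (r - x0))"
  have "\<delta> > 0" using \<delta>1(1) x0 unfolding \<delta>_def I by simp
  moreover have near_I: "x \<in> I" if "\<bar>x - x0\<bar> < \<delta>" for x using that unfolding \<delta>_def I by auto
  ultimately have "perturbed_center p1 p2 x0 \<delta> s \<epsilon> (fst (prim_dir p1 p2 x0)) (snd (prim_dir p1 p2 x0))
    (pert_form p1 p2 (centers p1 p2 I L) \<beta> \<epsilon>)" for \<epsilon>
    using Q s smooth_on_DERIV[OF smooth(1)] smooth_on_DERIV[OF smooth(2)] x0 \<delta>1(2)
    unfolding perturbed_center_def pert_form_def \<delta>_def by (auto dest: near_I)
  thus thesis using that by blast
qed

theorem mainTheorem11: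
  fixes p1 p2 :: "real \<Rightarrow> real" and I :: "real set" and L x0 :: real
    and \<beta> :: "real \<Rightarrow> real \<Rightarrow> real"
  assumes contact: "toric_contact p1 p2 I"
    and fin: "finite (centers p1 p2 I L)"
    and bump_smooth: "\<forall>c\<in>centers p1 p2 I L. smooth_on (\<beta> c) UNIV"
    and bump_shape: "\<forall>c\<in>centers p1 p2 I L. \<exists>\<delta>>0. \<forall>x. \<bar>x - c\<bar> < \<delta> \<longrightarrow> \<beta> c x = 1 - (x - c)^2"
    and bump_supp: "\<forall>c\<in>centers p1 p2 I L. closure {x. \<beta> c x \<noteq> 0} \<subseteq> I"
    and bump_disj: "\<forall>c\<in>centers p1 p2 I L. \<forall>c'\<in>centers p1 p2 I L. c \<noteq> c' \<longrightarrow>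
                      closure {x. \<beta> c x \<noteq> 0} \<inter> closure {x. \<beta> c' x \<noteq> 0} = {}"
    and center: "x0 \<in> centers p1 p2 I L"
    and W: "deriv p1 x0 * deriv (deriv p2) x0 - deriv (deriv p1) x0 * deriv p2 x0 > 0"
  shows "\<exists>\<epsilon>0>0. \<forall>\<epsilon>. 0 < \<epsilon> \<and> \<epsilon> < \<epsilon>0 \<longrightarrow>
     (\<forall>q1 q2. let a0 = real_of_int (fst (prim_dir p1 p2 x0));
                  b0 = real_of_int (snd (prim_dir p1 p2 x0));
                  \<theta> = - b0 * q1 + a0 * q2 in
        (\<theta> + 1/2 \<in> \<int> \<longrightarrow>
           CZ_orbit_is (pert_form p1 p2 (centers p1 p2 I L) \<beta> \<epsilon>) V1 (V2 p1 p2) (vector [x0, q1, q2]) 0) \<and>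
        (\<theta> \<in> \<int> \<longrightarrow>
           CZ_orbit_is (pert_form p1 p2 (centers p1 p2 I L) \<beta> \<epsilon>) V1 (V2 p1 p2) (vector [x0, q1, q2]) 1))"
proof -
  obtain \<delta> s where "\<And>\<epsilon>. perturbed_center p1 p2 x0 \<delta> s \<epsilon> (fst (prim_dir p1 p2 x0)) (snd (prim_dir p1 p2 x0))
      (pert_form p1 p2 (centers p1 p2 I L) \<beta> \<epsilon>)"
    using perturbed_center_at_center[OF contact fin bump_shape bump_disj center] by blast
  from CZ_critical_orbits_small_eps[OF this W] show ?thesis unfolding Let_def by simp
qed

end
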